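(* Let $G$ be a positively $0$-transitive Lie superalgebra such that $G_+$ is generated by $G_1$. Let $U$ be the universal Lie superalgebra associated to $U_1:=G_1$, let $D_{2+}\subseteq U_{2+}$ be the kernel of the canonical surjective Lie superalgebra morphism $U_+\to G_+$ restricting to the identity on $U_1$, and let $N=\{x\in U:[x,d]\in D_{2+}\text{ for all }d\in D_{2+}\}$ be the idealiser of $D_{2+}$ in $U$. Then there is an injective Lie superalgebra morphism from $G$ into the prolongation $N/D_{2+}$ of $G_+$.
   Context: All vector spaces are over $\mathbb{K}=\mathbb{R}$ or $\mathbb{C}$, $\mathbb{Z}$-graded, parity equal to degree mod 2; morphisms preserve degree. A Lie superalgebra is a graded space with degree-preserving bracket satisfying graded antisymmetry and graded Jacobi. $G_\pm=\bigoplus_{k\ge1}G_{\pm k}$, $G_{0-}=\bigoplus_{k\le0}G_k$, $U_{2+}=\bigoplus_{k\ge2}U_k$. $G$ is positively $0$-transitive if for $x\in G_{0-}$, $[G_+,x]=0$ implies $x=0$. Universal Lie superalgebra: for $U_1$ concentrated in degree 1 (odd), put $U_0=\mathrm{End}(U_1)$, $U_{-p+1}=\mathrm{Hom}(U_1,U_{-p+2})$ for $p\ge2$; on $U_{1-}=\bigoplus_{k\le1}U_k$ define brackets recursively by $[x,u]=x(u)$, $[u,x]=-(-1)^{|x|}x(u)$, $[x,y](u)=[x,y(u)]+(-1)^{|y|}[x(u),y]$ ($x,y\in U_{0-}$, $u\in U_1$), giving a semilocal Lie superalgebra; $U$ is the unique Lie superalgebra extending it such that $U_+$ is the free Lie superalgebra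 generated by $U_1$. *)

theory Defs
  imports Main
begin

text \<open>A (possibly infinite-dimensional) Z-graded vector space over the field 'k,
  given by a carrier with its own operations and a grading int => subspace.
  Parity of an element of degree k is k mod 2.\<close>

record ('k, 'a) lsa =
  carrier :: "'a set"
  add :: "'a \<Rightarrow> 'a \<Rightarrow> 'a"
  zero :: "'a"
  scal :: "'k \<Rightarrow> 'a \<Rightarrow> 'a"
  brk :: "'a \<Rightarrow> 'a \<Rightarrow> 'a"
  grd :: "int \<Rightarrow> 'a set"

definition vs :: "('k::field, 'a, 'b) lsa_scheme \<Rightarrow> bool" where
  "vs L \<longleftrightarrow>
     zero L \<in> carrier L \<and>
     (\<forall>x\<in>carrier L. \<forall>y\<in>carrier L. add L x y \<in> carrier L) \<and>
     (\<forall>c. \<forall>x\<in>carrier L. scal L c x \<in> carrier L) \<and>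
     (\<forall>x\<in>carrier L. \<forall>y\<in>carrier L. \<forall>z\<in>carrier L. add L (add L x y) z = add L x (add L y z)) \<and>
     (\<forall>x\<in>carrier L. \<forall>y\<in>carrier L. add L x y = add L y x) \<and>
     (\<forall>x\<in>carrier L. add L (zero L) x = x) \<and>
     (\<forall>x\<in>carrier L. \<exists>y\<in>carrier L. add L x y = zero L) \<and>
     (\<forall>c. \<forall>x\<in>carrier L. \<forall>y\<in>carrier L. scal L c (add L x y) = add L (scal L c x) (scal L c y)) \<and>
     (\<forall>c d. \<forall>x\<in>carrier L. scal L (c + d) x = add L (scal L c x) (scal L d x)) \<and>
     (\<forall>c d. \<forall>x\<in>carrier L. scal L (c * d) x = scal L c (scal L d x)) \<and>
     (\<forall>x\<in>carrier L. scal L 1 x = x)"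

definition subspace :: "('k, 'a, 'b) lsa_scheme \<Rightarrow> 'a set \<Rightarrow> bool" where
  "subspace L S \<longleftrightarrow> S \<subseteq> carrier L \<and> zero L \<in> S \<and>
     (\<forall>x\<in>S. \<forall>y\<in>S. add L x y \<in> S) \<and> (\<forall>c. \<forall>x\<in>S. scal L c x \<in> S)"

definition span :: "('k, 'a, 'b) lsa_scheme \<Rightarrow> 'a set \<Rightarrow> 'a set" where
  "span L X = \<Inter>{S. subspace L S \<and> X \<subseteq> S}"

definition lie_gen :: "('k, 'a, 'b) lsa_scheme \<Rightarrow> 'a set \<Rightarrow> 'a set" where
  "lie_gen L X = \<Inter>{S. subspace L S \<and> X \<subseteq> S \<and> (\<forall>a\<in>S. \<forall>b\<in>S. brk L a b \<in> S)}"

definition hsum :: "('k, 'a, 'b) lsa_scheme \<Rightarrow> int list \<Rightarrow> (int \<Rightarrow> 'a) \<Rightarrow> 'a" where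
  "hsum L ks c = foldr (\<lambda>k acc. add L (c k) acc) ks (zero L)"

text \<open>The carrier is the (internal) direct sum of the subspaces grd L k.\<close>
definition graded :: "('k, 'a, 'b) lsa_scheme \<Rightarrow> bool" where
  "graded L \<longleftrightarrow>
     (\<forall>k. subspace L (grd L k)) \<and>
     carrier L = {hsum L ks c | ks c. \<forall>k\<in>set ks. c k \<in> grd L k} \<and>
     (\<forall>ks c. distinct ks \<and> (\<forall>k\<in>set ks. c k \<in> grd L k) \<and> hsum L ks c = zero L
        \<longrightarrow> (\<forall>k\<in>set ks. c k = zero L))"

text \<open>(-1)^(|x||y|) for homogeneous x, y of degrees i, j (parity = degree mod 2).\<close>
definition ssign :: "int \<Rightarrow> int \<Rightarrow> 'k::field" where
  "ssign i j = (if odd i \<and> odd j then -1 else 1)"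

definition lie_superalgebra :: "('k::field, 'a, 'b) lsa_scheme \<Rightarrow> bool" where
  "lie_superalgebra L \<longleftrightarrow> vs L \<and> graded L \<and>
     (\<forall>x\<in>carrier L. \<forall>y\<in>carrier L. brk L x y \<in> carrier L) \<and>
     (\<forall>x\<in>carrier L. \<forall>y\<in>carrier L. \<forall>z\<in>carrier L.
        brk L (add L x y) z = add L (brk L x z) (brk L y z) \<and>
        brk L z (add L x y) = add L (brk L z x) (brk L z y)) \<and>
     (\<forall>c. \<forall>x\<in>carrier L. \<forall>y\<in>carrier L.
        brk L (scal L c x) y = scal L c (brk L x y) \<and>
        brk L x (scal L c y) = scal L c (brk L x y)) \<and>
     (\<forall>i j. \<forall>x\<in>grd L i. \<forall>y\<in>grd L j. brk L x y \<in> grd L (i + j)) \<and>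
     (\<forall>i j. \<forall>x\<in>grd L i. \<forall>y\<in>grd L j.
        brk L x y = scal L (- ssign i j) (brk L y x)) \<and>
     (\<forall>i j. \<forall>x\<in>grd L i. \<forall>y\<in>grd L j. \<forall>z\<in>carrier L.
        brk L x (brk L y z) = add L (brk L (brk L x y) z) (scal L (ssign i j) (brk L y (brk L x z))))"

definition lin_map :: "('k, 'a, 'b) lsa_scheme \<Rightarrow> ('k, 'c, 'd) lsa_scheme \<Rightarrow> 'a set \<Rightarrow> 'c set
    \<Rightarrow> ('a \<Rightarrow> 'c) \<Rightarrow> bool" where
  "lin_map L M X Y f \<longleftrightarrow> (\<forall>x\<in>X. f x \<in> Y) \<and>
     (\<forall>x\<in>X. \<forall>y\<in>X. f (add L x y) = add M (f x) (f y)) \<and>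
     (\<forall>c. \<forall>x\<in>X. f (scal L c x) = scal M c (f x))"

definition lsa_hom :: "('k, 'a, 'b) lsa_scheme \<Rightarrow> ('k, 'c, 'd) lsa_scheme \<Rightarrow> ('a \<Rightarrow> 'c) \<Rightarrow> bool" where
  "lsa_hom L M f \<longleftrightarrow> lin_map L M (carrier L) (carrier M) f \<and>
     (\<forall>k. \<forall>x\<in>grd L k. f x \<in> grd M k) \<and>
     (\<forall>x\<in>carrier L. \<forall>y\<in>carrier L. f (brk L x y) = brk M (f x) (f y))"

definition pos_part :: "('k, 'a) lsa \<Rightarrow> ('k, 'a) lsa" where
  "pos_part L = L\<lparr>carrier := span L (\<Union>k\<in>{1..}. grd L k),
                   grd := (\<lambda>k. if 1 \<le> k then grd L k else {zero L})\<rparr>"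

definition nonpos_part :: "('k, 'a) lsa \<Rightarrow> 'a set" where
  "nonpos_part L = span L (\<Union>k\<in>{..0}. grd L k)"

definition pos_0_transitive :: "('k, 'a) lsa \<Rightarrow> bool" where
  "pos_0_transitive L \<longleftrightarrow>
     (\<forall>x\<in>nonpos_part L. (\<forall>y\<in>carrier (pos_part L). brk L y x = zero L) \<longrightarrow> x = zero L)"

text \<open>The targets are
  taken with carriers in the type of U; this suffices.\<close>
definition free_pos_part :: "('k::field, 'a) lsa \<Rightarrow> bool" where
  "free_pos_part U \<longleftrightarrow>
     (\<forall>(M :: ('k, 'a) lsa) f. lie_superalgebra M \<and> lin_map U M (grd U 1) (grd M 1) f \<longrightarrow>
        (\<exists>\<phi>. lsa_hom (pos_part U) M \<phi> \<and> (\<forall>u\<in>grd U 1. \<phi> u = f u)) \<and>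
        (\<forall>\<phi> \<psi>. lsa_hom (pos_part U) M \<phi> \<and> (\<forall>u\<in>grd U 1. \<phi> u = f u) \<and>
                 lsa_hom (pos_part U) M \<psi> \<and> (\<forall>u\<in>grd U 1. \<psi> u = f u)
                 \<longrightarrow> (\<forall>x\<in>carrier (pos_part U). \<phi> x = \<psi> x)))"

text \<open>The universal Lie superalgebra on U_1: U_0 = End(U_1), U_{k} = Hom(U_1, U_{k+1})
  for k <= 0 with [x,u] = x(u), i.e. x |-> [x,-] restricted to U_1 is a bijection
  U_k -> Hom(U_1, U_{k+1}); and U_+ is free on U_1.\<close>
definition universal_lsa :: "('k::field, 'a) lsa \<Rightarrow> bool" where
  "universal_lsa U \<longleftrightarrow> lie_superalgebra U \<and>
     (\<forall>k\<le>0. \<forall>f. lin_map U U (grd U 1) (grd U (k + 1)) f \<longrightarrow>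
        (\<exists>!x. x \<in> grd U k \<and> (\<forall>u\<in>grd U 1. brk U x u = f u))) \<and>
     free_pos_part U"

definition coset :: "('k, 'a) lsa \<Rightarrow> 'a set \<Rightarrow> 'a \<Rightarrow> 'a set" where
  "coset U D a = {add U a d | d. d \<in> D}"

definition quot :: "('k, 'a) lsa \<Rightarrow> 'a set \<Rightarrow> 'a set \<Rightarrow> ('k, 'a set) lsa" where
  "quot U N D =
     \<lparr>carrier = coset U D ` N,
      add = (\<lambda>A B. coset U D (add U (SOME a. a \<in> A) (SOME b. b \<in> B))),
      zero = D,
      scal = (\<lambda>c A. coset U D (scal U c (SOME a. a \<in> A))),
      brk = (\<lambda>A B. coset U D (brk U (SOME a. a \<in> A) (SOME b. b \<in> B))),
      grd = (\<lambda>k. coset U D ` (N \<inter> grd U k))\<rparr>"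

definition idealiser :: "('k, 'a) lsa \<Rightarrow> 'a set \<Rightarrow> 'a set" where
  "idealiser U D = {x \<in> carrier U. \<forall>d\<in>D. brk U x d \<in> D}"

end

theory Submission
  imports "HOL-Algebra.FiniteProduct" Defs
begin

(*
  Every x in G_k is lifted to rho k x in U_k: in positive degrees by any preimage under pi
  (pi is onto because G_+ is generated by G_1), in degree k <= 0 as the element of
  U_k = Hom(U_1, U_(k+1)) given by e |-> rho (k + 1) [x, pi e].  Brackets of lifts are lifts:
  if one degree is positive, by induction over the generation of U_+ by U_1 (a consequence of
  freeness) and the Jacobi identity; if both are nonpositive, by testing against U_1 and
  inducting on the total degree.  Hence the lifts normalise D_2+ = ker pi, and
  x |-> lift x + D_2+ is a morphism into N/D_2+.  It is injective because a homogeneous element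
  of nonpositive degree with zero lift is killed by G_+, hence zero by positive 0-transitivity.
*)

section \<open>Vector spaces on a carrier\<close>

definition add_monoid :: "('k, 'a) lsa \<Rightarrow> 'a monoid" where
  "add_monoid L = \<lparr>partial_object.carrier = carrier L, mult = add L, one = zero L\<rparr>"

lemma add_monoid_simps [simp]:
  "partial_object.carrier (add_monoid L) = carrier L"
  "monoid.mult (add_monoid L) = add L"
  "monoid.one (add_monoid L) = zero L"
  by (simp_all add: add_monoid_def)

definition vsum :: "('k, 'a) lsa \<Rightarrow> ('i \<Rightarrow> 'a) \<Rightarrow> 'i set \<Rightarrow> 'a" where
  "vsum L f S = finprod (add_monoid L) f S"

definition neg :: "('k::field, 'a) lsa \<Rightarrow> 'a \<Rightarrow> 'a" where
  "neg L x = scal L (-1) x"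

locale vec_space =
  fixes L :: "('k::field, 'a) lsa"
  assumes vs: "vs L"
begin

lemma zero_closed [simp]: "zero L \<in> carrier L"
  using vs unfolding vs_def by metis

lemma add_closed [simp]: "x \<in> carrier L \<Longrightarrow> y \<in> carrier L \<Longrightarrow> add L x y \<in> carrier L"
  using vs unfolding vs_def by metis

lemma scal_closed [simp]: "x \<in> carrier L \<Longrightarrow> scal L c x \<in> carrier L"
  using vs unfolding vs_def by metis

lemma neg_closed [simp]: "x \<in> carrier L \<Longrightarrow> neg L x \<in> carrier L"
  by (simp add: neg_def)

lemma add_assoc:
  "x \<in> carrier L \<Longrightarrow> y \<in> carrier L \<Longrightarrow> z \<in> carrier L \<Longrightarrow>
    add L (add L x y) z = add L x (add L y z)"
  using vs unfolding vs_def by metis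

lemma add_commute: "x \<in> carrier L \<Longrightarrow> y \<in> carrier L \<Longrightarrow> add L x y = add L y x"
  using vs unfolding vs_def by metis

lemma add_left_commute:
  "x \<in> carrier L \<Longrightarrow> y \<in> carrier L \<Longrightarrow> z \<in> carrier L \<Longrightarrow>
    add L x (add L y z) = add L y (add L x z)"
  by (metis add_assoc add_commute)

lemma add_zero_left [simp]: "x \<in> carrier L \<Longrightarrow> add L (zero L) x = x"
  using vs unfolding vs_def by metis

lemma add_zero_right [simp]: "x \<in> carrier L \<Longrightarrow> add L x (zero L) = x"
  using add_commute add_zero_left zero_closed by metis

lemma scal_add_right:
  "x \<in> carrier L \<Longrightarrow> y \<in> carrier L \<Longrightarrow> scal L c (add L x y) = add L (scal L c x) (scal L c y)"
  using vs unfolding vs_def by metis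

lemma scal_add_left: "x \<in> carrier L \<Longrightarrow> scal L (c + d) x = add L (scal L c x) (scal L d x)"
  using vs unfolding vs_def by metis

lemma scal_scal: "x \<in> carrier L \<Longrightarrow> scal L c (scal L d x) = scal L (c * d) x"
  using vs unfolding vs_def by metis

lemma scal_one [simp]: "x \<in> carrier L \<Longrightarrow> scal L 1 x = x"
  using vs unfolding vs_def by metis

lemma add_left_cancel:
  assumes "a \<in> carrier L" "b \<in> carrier L" "c \<in> carrier L" "add L a b = add L a c"
  shows "b = c"
proof -
  obtain y where y: "y \<in> carrier L" "add L a y = zero L"
    using vs assms(1) unfolding vs_def by metis
  have "add L y (add L a b) = add L y (add L a c)"
    using assms by simp
  then show ?thesis
    using assms y by (metis add_assoc add_commute add_zero_left)
qed

lemma scal_zero_left [simp]: "x \<in> carrier L \<Longrightarrow> scal L 0 x = zero L"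
  using add_left_cancel[of "scal L 0 x" "scal L 0 x" "zero L"] scal_add_left[of x 0 0] by simp

lemma scal_zero_right [simp]: "scal L c (zero L) = zero L"
  using add_left_cancel[of "scal L c (zero L)" "scal L c (zero L)" "zero L"]
    scal_add_right[of "zero L" "zero L" c] by simp

lemma add_neg_self [simp]: "x \<in> carrier L \<Longrightarrow> add L x (neg L x) = zero L"
  using scal_add_left[of x 1 "-1"] by (simp add: neg_def)

lemma neg_zero [simp]: "neg L (zero L) = zero L"
  by (simp add: neg_def)

lemma add_neg_eq_zeroD:
  assumes "x \<in> carrier L" "y \<in> carrier L" "add L x (neg L y) = zero L"
  shows "x = y"
  using assms add_left_cancel[of "neg L y" x y] by (simp add: add_commute)

lemma add_add_neg_cancel: "x \<in> carrier L \<Longrightarrow> y \<in> carrier L \<Longrightarrow> add L x (add L y (neg L x)) = y"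
  by (metis add_assoc add_commute add_neg_self add_zero_right neg_closed)

lemma comm_monoid_add_monoid: "comm_monoid (add_monoid L)"
proof (rule comm_monoidI)
  fix x y
  assume "x \<in> partial_object.carrier (add_monoid L)" "y \<in> partial_object.carrier (add_monoid L)"
  then show "x \<otimes>\<^bsub>add_monoid L\<^esub> y = y \<otimes>\<^bsub>add_monoid L\<^esub> x"
    by (simp add: add_commute)
qed (auto simp: add_assoc)

sublocale A: comm_monoid "add_monoid L"
  by (rule comm_monoid_add_monoid)

lemma vsum_closed [simp]: "(\<And>i. i \<in> S \<Longrightarrow> f i \<in> carrier L) \<Longrightarrow> vsum L f S \<in> carrier L"
  unfolding vsum_def using A.finprod_closed[of f S] by (auto simp: Pi_def)

lemma vsum_empty [simp]: "vsum L f {} = zero L"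
  unfolding vsum_def by simp

lemma vsum_infinite [simp]: "\<not> finite S \<Longrightarrow> vsum L f S = zero L"
  unfolding vsum_def by simp

lemma vsum_insert:
  "finite S \<Longrightarrow> i \<notin> S \<Longrightarrow> (\<And>j. j \<in> insert i S \<Longrightarrow> f j \<in> carrier L) \<Longrightarrow>
    vsum L f (insert i S) = add L (f i) (vsum L f S)"
  unfolding vsum_def by (subst A.finprod_insert) (auto simp: Pi_def)

lemma vsum_cong:
  "S = T \<Longrightarrow> (\<And>i. i \<in> T \<Longrightarrow> g i \<in> carrier L) \<Longrightarrow> (\<And>i. i \<in> T \<Longrightarrow> f i = g i) \<Longrightarrow>
    vsum L f S = vsum L g T"
  unfolding vsum_def using A.finprod_cong'[of S T g f] by (auto simp: Pi_def)

lemma vsum_add: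
  "(\<And>i. i \<in> S \<Longrightarrow> f i \<in> carrier L) \<Longrightarrow> (\<And>i. i \<in> S \<Longrightarrow> g i \<in> carrier L) \<Longrightarrow>
    vsum L (\<lambda>i. add L (f i) (g i)) S = add L (vsum L f S) (vsum L g S)"
  unfolding vsum_def using A.finprod_multf[of f S g] by (auto simp: Pi_def)

lemma vsum_zero: "(\<And>i. i \<in> S \<Longrightarrow> f i = zero L) \<Longrightarrow> vsum L f S = zero L"
  unfolding vsum_def using A.finprod_one_eqI[of S f] by auto

lemma vsum_singleton [simp]: "f i \<in> carrier L \<Longrightarrow> vsum L f {i} = f i"
  using vsum_insert[of "{}" i f] by simp

lemma vsum_mono_neutral:
  "finite T \<Longrightarrow> S \<subseteq> T \<Longrightarrow> (\<And>i. i \<in> T - S \<Longrightarrow> f i = zero L) \<Longrightarrow>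
    (\<And>i. i \<in> T \<Longrightarrow> f i \<in> carrier L) \<Longrightarrow> vsum L f S = vsum L f T"
  unfolding vsum_def using A.finprod_mono_neutral_cong_left[of T S f f] by (auto simp: Pi_def)

lemma vsum_extend:
  assumes "finite T" "S \<subseteq> T" "\<And>k. k \<in> S \<Longrightarrow> f k \<in> carrier L"
  shows "vsum L f S = vsum L (\<lambda>k. if k \<in> S then f k else zero L) T"
proof -
  have "vsum L f S = vsum L (\<lambda>k. if k \<in> S then f k else zero L) S"
    by (rule vsum_cong) (use assms in auto)
  also have "\<dots> = vsum L (\<lambda>k. if k \<in> S then f k else zero L) T"
    by (rule vsum_mono_neutral) (use assms in auto)
  finally show ?thesis .
qed

lemma vsum_in_subspace:
  assumes "subspace L W" "\<And>i. i \<in> S \<Longrightarrow> f i \<in> W"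
  shows "vsum L f S \<in> W"
  using assms(2)
proof (induct S rule: infinite_finite_induct)
  case (insert i S)
  then have "\<And>j. j \<in> insert i S \<Longrightarrow> f j \<in> carrier L"
    using assms(1) by (auto simp: subspace_def)
  then have "vsum L f (insert i S) = add L (f i) (vsum L f S)"
    by (rule vsum_insert[OF insert(1,2)])
  with insert assms(1) show ?case
    by (simp add: subspace_def)
qed (use assms(1) in \<open>simp_all add: subspace_def\<close>)

end

lemma vsum_additive:
  assumes L: "vec_space L" and M: "vec_space M" and A: "subspace L A"
    and f: "\<And>i. i \<in> S \<Longrightarrow> f i \<in> A"
    and h: "\<And>x. x \<in> A \<Longrightarrow> h x \<in> carrier M"
    and h_add: "\<And>x y. x \<in> A \<Longrightarrow> y \<in> A \<Longrightarrow> h (add L x y) = add M (h x) (h y)"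
    and h_zero: "h (zero L) = zero M"
  shows "h (vsum L f S) = vsum M (\<lambda>i. h (f i)) S"
  using f
proof (induct S rule: infinite_finite_induct)
  case (insert i S)
  interpret L: vec_space L by (rule L)
  interpret M: vec_space M by (rule M)
  have "\<And>j. j \<in> insert i S \<Longrightarrow> f j \<in> carrier L"
    using insert(4) A by (auto simp: subspace_def)
  then have "h (vsum L f (insert i S)) = h (add L (f i) (vsum L f S))"
    by (subst L.vsum_insert[OF insert(1,2)]) auto
  also have "\<dots> = add M (h (f i)) (vsum M (\<lambda>i. h (f i)) S)"
    using insert h_add L.vsum_in_subspace[OF A, of S f] by simp
  also have "\<dots> = vsum M (\<lambda>i. h (f i)) (insert i S)"
    using insert h by (intro M.vsum_insert[OF insert(1,2), symmetric]) auto
  finally show ?case .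
qed (use L M h_zero in \<open>simp_all add: vec_space.vsum_empty vec_space.vsum_infinite\<close>)

context vec_space
begin

lemma subspace_subset: "subspace L W \<Longrightarrow> x \<in> W \<Longrightarrow> x \<in> carrier L"
  by (auto simp: subspace_def)

lemma subspace_zero: "subspace L W \<Longrightarrow> zero L \<in> W"
  by (simp add: subspace_def)

lemma subspace_add: "subspace L W \<Longrightarrow> x \<in> W \<Longrightarrow> y \<in> W \<Longrightarrow> add L x y \<in> W"
  by (simp add: subspace_def)

lemma subspace_scal: "subspace L W \<Longrightarrow> x \<in> W \<Longrightarrow> scal L c x \<in> W"
  by (simp add: subspace_def)

lemma subspace_neg: "subspace L W \<Longrightarrow> x \<in> W \<Longrightarrow> neg L x \<in> W"
  by (simp add: subspace_def neg_def)

lemma subspace_carrier: "subspace L (carrier L)"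
  by (simp add: subspace_def)

lemma subspace_zero_singleton: "subspace L {zero L}"
  by (simp add: subspace_def)

lemma span_subspace: "X \<subseteq> carrier L \<Longrightarrow> subspace L (span L X)"
  unfolding span_def subspace_def by auto

lemma span_superset: "X \<subseteq> span L X"
  unfolding span_def by auto

lemma span_minimal: "subspace L W \<Longrightarrow> X \<subseteq> W \<Longrightarrow> span L X \<subseteq> W"
  unfolding span_def by auto

lemma vs_restrict:
  assumes "subspace L S"
  shows "vs (L\<lparr>carrier := S, grd := W\<rparr>)"
  unfolding vs_def
proof (intro conjI ballI allI; simp)
  have Sc: "\<And>x. x \<in> S \<Longrightarrow> x \<in> carrier L"
    using assms subspace_subset by blast
  show "zero L \<in> S" "\<And>x y. x \<in> S \<Longrightarrow> y \<in> S \<Longrightarrow> add L x y \<in> S" "\<And>c x. x \<in> S \<Longrightarrow> scal L c x \<in> S"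
    using assms by (simp_all add: subspace_zero subspace_add subspace_scal)
  show "\<And>x. x \<in> S \<Longrightarrow> \<exists>y\<in>S. add L x y = zero L"
    using assms Sc add_neg_self subspace_neg by blast
  show "\<And>x y. x \<in> S \<Longrightarrow> y \<in> S \<Longrightarrow> add L x y = add L y x"
    using Sc add_commute by blast
qed (use assms subspace_subset in \<open>auto simp: add_assoc scal_add_right scal_add_left scal_scal\<close>)

definition eq_mod :: "'a set \<Rightarrow> 'a \<Rightarrow> 'a \<Rightarrow> bool" where
  "eq_mod W u v \<longleftrightarrow> v \<in> carrier L \<and> (\<exists>w\<in>W. u = add L v w)"

lemma eq_modI: "v \<in> carrier L \<Longrightarrow> w \<in> W \<Longrightarrow> u = add L v w \<Longrightarrow> eq_mod W u v"
  unfolding eq_mod_def by blast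

lemma eq_modE:
  assumes "eq_mod W u v"
  obtains w where "w \<in> W" "u = add L v w"
  using assms unfolding eq_mod_def by blast

lemma eq_mod_closed:
  "subspace L W \<Longrightarrow> eq_mod W u v \<Longrightarrow> u \<in> carrier L \<and> v \<in> carrier L"
  unfolding eq_mod_def using subspace_subset by auto

lemma eq_mod_zero_iff: "subspace L W \<Longrightarrow> eq_mod W u (zero L) \<longleftrightarrow> u \<in> W"
  unfolding eq_mod_def using subspace_subset by auto

lemma eq_mod_refl: "subspace L W \<Longrightarrow> v \<in> carrier L \<Longrightarrow> eq_mod W v v"
  by (rule eq_modI[of _ "zero L"]) (simp_all add: subspace_zero)

lemma eq_mod_sym:
  assumes W: "subspace L W" and "eq_mod W u v"
  shows "eq_mod W v u"
proof -
  obtain w where w: "w \<in> W" "u = add L v w" "v \<in> carrier L"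
    using assms(2) unfolding eq_mod_def by blast
  have "v = add L u (neg L w)"
    using w subspace_subset[OF W] by (simp add: add_assoc)
  then show ?thesis
    using w W by (intro eq_modI[of _ "neg L w"]) (simp_all add: subspace_neg subspace_subset)
qed

lemma eq_mod_trans:
  assumes W: "subspace L W" and "eq_mod W u v" "eq_mod W v t"
  shows "eq_mod W u t"
proof -
  obtain w where w: "w \<in> W" "u = add L v w"
    using assms(2) by (rule eq_modE)
  obtain w' where w': "w' \<in> W" "v = add L t w'" "t \<in> carrier L"
    using assms(3) unfolding eq_mod_def by blast
  have "u = add L t (add L w' w)"
    using w w' subspace_subset[OF W] by (simp add: add_assoc)
  then show ?thesis
    using w w' W by (intro eq_modI) (simp_all add: subspace_add)
qed

lemma eq_mod_add:
  assumes W: "subspace L W" and "eq_mod W u u'" "eq_mod W v v'"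
  shows "eq_mod W (add L u v) (add L u' v')"
proof -
  obtain w where w: "w \<in> W" "u = add L u' w" "u' \<in> carrier L"
    using assms(2) unfolding eq_mod_def by blast
  obtain w' where w': "w' \<in> W" "v = add L v' w'" "v' \<in> carrier L"
    using assms(3) unfolding eq_mod_def by blast
  have "add L u v = add L (add L u' v') (add L w w')"
    using w w' subspace_subset[OF W] by (simp add: add_assoc add_left_commute)
  then show ?thesis
    using w w' W by (intro eq_modI) (simp_all add: subspace_add)
qed

lemma eq_mod_scal:
  assumes W: "subspace L W" and "eq_mod W u v"
  shows "eq_mod W (scal L c u) (scal L c v)"
proof -
  obtain w where w: "w \<in> W" "u = add L v w" "v \<in> carrier L"
    using assms(2) unfolding eq_mod_def by blast
  then show ?thesis
    using W by (intro eq_modI[of _ "scal L c w"])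
      (simp_all add: scal_add_right subspace_subset subspace_scal)
qed

lemma eq_mod_vsum:
  assumes W: "subspace L W" and "\<And>i. i \<in> S \<Longrightarrow> eq_mod W (f i) (g i)"
  shows "eq_mod W (vsum L f S) (vsum L g S)"
  using assms(2)
proof (induct S rule: infinite_finite_induct)
  case (insert i S)
  have "\<And>j. j \<in> insert i S \<Longrightarrow> f j \<in> carrier L \<and> g j \<in> carrier L"
    using insert(4) eq_mod_closed[OF W] by blast
  then have "vsum L f (insert i S) = add L (f i) (vsum L f S)"
    "vsum L g (insert i S) = add L (g i) (vsum L g S)"
    by (blast intro: vsum_insert[OF insert(1,2)])+
  then show ?case
    using insert eq_mod_add[OF W] by simp
qed (simp_all add: eq_mod_refl W)

lemma mem_coset_iff: "v \<in> carrier L \<Longrightarrow> u \<in> coset L W v \<longleftrightarrow> eq_mod W u v"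
  unfolding coset_def eq_mod_def by blast

lemma coset_eq_iff:
  assumes W: "subspace L W" and "u \<in> carrier L" "v \<in> carrier L"
  shows "coset L W u = coset L W v \<longleftrightarrow> eq_mod W u v"
proof
  assume "coset L W u = coset L W v"
  moreover have "u \<in> coset L W u"
    using assms by (simp add: mem_coset_iff eq_mod_refl)
  ultimately show "eq_mod W u v"
    using assms by (simp add: mem_coset_iff)
next
  assume uv: "eq_mod W u v"
  show "coset L W u = coset L W v"
    unfolding set_eq_iff
  proof
    fix a
    have "eq_mod W a u \<longleftrightarrow> eq_mod W a v"
      using uv eq_mod_trans[OF W] eq_mod_sym[OF W uv] by blast
    then show "a \<in> coset L W u \<longleftrightarrow> a \<in> coset L W v"
      using assms by (simp add: mem_coset_iff)
  qed
qed

lemma some_coset_eq_mod: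
  assumes W: "subspace L W" and v: "v \<in> carrier L"
  shows "eq_mod W (SOME u. u \<in> coset L W v) v"
proof -
  have "v \<in> coset L W v"
    using assms by (simp add: mem_coset_iff eq_mod_refl)
  then have "(SOME u. u \<in> coset L W v) \<in> coset L W v"
    by (rule someI)
  then show ?thesis
    using v by (simp add: mem_coset_iff)
qed

lemma quot_add_coset:
  assumes W: "subspace L W" and "u \<in> carrier L" "v \<in> carrier L"
  shows "add (quot L N W) (coset L W u) (coset L W v) = coset L W (add L u v)"
proof -
  have "eq_mod W (add L (SOME a. a \<in> coset L W u) (SOME b. b \<in> coset L W v)) (add L u v)"
    using assms by (intro eq_mod_add[OF W] some_coset_eq_mod)
  then show ?thesis
    using assms eq_mod_closed[OF W] by (simp add: quot_def coset_eq_iff[OF W])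
qed

lemma quot_scal_coset:
  assumes W: "subspace L W" and "u \<in> carrier L"
  shows "scal (quot L N W) c (coset L W u) = coset L W (scal L c u)"
proof -
  have "eq_mod W (scal L c (SOME a. a \<in> coset L W u)) (scal L c u)"
    using assms by (intro eq_mod_scal[OF W] some_coset_eq_mod)
  then show ?thesis
    using assms eq_mod_closed[OF W] by (simp add: quot_def coset_eq_iff[OF W])
qed

end

section \<open>Graded vector spaces\<close>

definition sum_space :: "('k, 'a) lsa \<Rightarrow> (int \<Rightarrow> 'a set) \<Rightarrow> 'a set" where
  "sum_space L W = {vsum L f S | S f. finite S \<and> (\<forall>k\<in>S. f k \<in> W k)}"

context vec_space
begin

lemma hsum_eq_vsum:
  "distinct ks \<Longrightarrow> \<forall>k\<in>set ks. c k \<in> carrier L \<Longrightarrow> hsum L ks c = vsum L c (set ks)"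
proof (induct ks)
  case (Cons k ks)
  then have "vsum L c (insert k (set ks)) = add L (c k) (vsum L c (set ks))"
    by (intro vsum_insert) auto
  with Cons show ?case
    by (simp add: hsum_def)
qed (simp add: hsum_def)

lemma sum_space_zero: "zero L \<in> sum_space L W"
  unfolding sum_space_def by (rule CollectI, rule exI[of _ "{}"]) auto

lemma sum_space_single: "v \<in> W k \<Longrightarrow> W k \<subseteq> carrier L \<Longrightarrow> v \<in> sum_space L W"
  unfolding sum_space_def by (rule CollectI, rule exI[of _ "{k}"], rule exI[of _ "\<lambda>_. v"]) auto

lemma sum_space_add:
  assumes W: "\<And>k. subspace L (W k)" and x: "x \<in> sum_space L W" and y: "y \<in> sum_space L W"
  shows "add L x y \<in> sum_space L W"
proof -
  have Wc: "\<And>k v. v \<in> W k \<Longrightarrow> v \<in> carrier L"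
    using W subspace_subset by blast
  obtain S f where S: "finite S" "\<forall>k\<in>S. f k \<in> W k" "x = vsum L f S"
    using x unfolding sum_space_def by blast
  obtain T g where T: "finite T" "\<forall>k\<in>T. g k \<in> W k" "y = vsum L g T"
    using y unfolding sum_space_def by blast
  define f' where "f' k = (if k \<in> S then f k else zero L)" for k
  define g' where "g' k = (if k \<in> T then g k else zero L)" for k
  have f'W: "f' k \<in> W k" and g'W: "g' k \<in> W k" for k
    unfolding f'_def g'_def using S T W subspace_zero by auto
  have "x = vsum L f' (S \<union> T)" "y = vsum L g' (S \<union> T)"
    unfolding f'_def g'_def S(3) T(3) by (rule vsum_extend; use S T Wc in auto)+
  moreover have "add L (vsum L f' (S \<union> T)) (vsum L g' (S \<union> T))
      = vsum L (\<lambda>k. add L (f' k) (g' k)) (S \<union> T)"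
    by (rule vsum_add[symmetric]) (use f'W g'W Wc in auto)
  ultimately have "add L x y = vsum L (\<lambda>k. add L (f' k) (g' k)) (S \<union> T)"
    by simp
  moreover have "\<forall>k\<in>S \<union> T. add L (f' k) (g' k) \<in> W k"
    using f'W g'W W subspace_add by blast
  ultimately show ?thesis
    unfolding sum_space_def using S T by blast
qed

lemma sum_space_scal:
  assumes W: "\<And>k. subspace L (W k)" and x: "x \<in> sum_space L W"
  shows "scal L c x \<in> sum_space L W"
proof -
  obtain S f where S: "finite S" "\<forall>k\<in>S. f k \<in> W k" "x = vsum L f S"
    using x unfolding sum_space_def by blast
  have "scal L c x = vsum L (\<lambda>k. scal L c (f k)) S"
    unfolding S(3) using S(2) W
    by (intro vsum_additive[OF vec_space_axioms vec_space_axioms subspace_carrier])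
      (auto simp: scal_add_right subspace_subset[OF W])
  moreover have "\<forall>k\<in>S. scal L c (f k) \<in> W k"
    using S W subspace_scal by blast
  ultimately show ?thesis
    unfolding sum_space_def using S by blast
qed

lemma sum_space_subset: "(\<And>k. W k \<subseteq> carrier L) \<Longrightarrow> sum_space L W \<subseteq> carrier L"
  unfolding sum_space_def by (auto intro!: vsum_closed)

lemma sum_space_subspace:
  assumes W: "\<And>k. subspace L (W k)"
  shows "subspace L (sum_space L W)"
  unfolding subspace_def
proof (intro conjI ballI allI)
  show "sum_space L W \<subseteq> carrier L"
    using W by (intro sum_space_subset) (auto simp: subspace_def)
qed (simp_all add: sum_space_zero sum_space_add[OF W] sum_space_scal[OF W])

lemma sum_space_eq_hsums:
  assumes W: "\<And>k. subspace L (W k)"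
  shows "sum_space L W = {hsum L ks c | ks c. \<forall>k\<in>set ks. c k \<in> W k}"
proof
  have Wc: "\<And>k v. v \<in> W k \<Longrightarrow> v \<in> carrier L"
    using W subspace_subset by blast
  show "sum_space L W \<subseteq> {hsum L ks c | ks c. \<forall>k\<in>set ks. c k \<in> W k}"
  proof
    fix x
    assume "x \<in> sum_space L W"
    then obtain S f where S: "finite S" "\<forall>k\<in>S. f k \<in> W k" "x = vsum L f S"
      unfolding sum_space_def by blast
    then have "x = hsum L (sorted_list_of_set S) f"
      using Wc by (subst hsum_eq_vsum) auto
    moreover have "\<forall>k\<in>set (sorted_list_of_set S). f k \<in> W k"
      using S by simp
    ultimately show "x \<in> {hsum L ks c | ks c. \<forall>k\<in>set ks. c k \<in> W k}"
      by blast
  qed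
  have "hsum L ks c \<in> sum_space L W" if "\<forall>k\<in>set ks. c k \<in> W k" for ks c
    using that
  proof (induct ks)
    case (Cons k ks)
    then have "c k \<in> sum_space L W" "hsum L ks c \<in> sum_space L W"
      using sum_space_single[of "c k" W k] W subspace_subset by auto
    then show ?case
      using sum_space_add[of W, OF W] by (simp add: hsum_def)
  qed (simp add: hsum_def sum_space_zero)
  then show "{hsum L ks c | ks c. \<forall>k\<in>set ks. c k \<in> W k} \<subseteq> sum_space L W"
    by blast
qed

lemma sum_space_eq_span:
  assumes W: "\<And>k. subspace L (W k)"
  shows "sum_space L W = span L (\<Union>k. W k)"
proof
  have Wc: "(\<Union>k. W k) \<subseteq> carrier L"
    using W subspace_subset by blast
  show "sum_space L W \<subseteq> span L (\<Union>k. W k)"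
  proof
    fix x
    assume "x \<in> sum_space L W"
    then obtain S f where S: "\<forall>k\<in>S. f k \<in> W k" "x = vsum L f S"
      unfolding sum_space_def by blast
    have "\<And>k. k \<in> S \<Longrightarrow> f k \<in> span L (\<Union>k. W k)"
      using S(1) span_superset by blast
    then show "x \<in> span L (\<Union>k. W k)"
      unfolding S(2) by (rule vsum_in_subspace[OF span_subspace[OF Wc]])
  qed
  have "(\<Union>k. W k) \<subseteq> sum_space L W"
    using Wc by (auto intro: sum_space_single)
  then show "span L (\<Union>k. W k) \<subseteq> sum_space L W"
    by (rule span_minimal[OF sum_space_subspace[OF W]])
qed

end

locale graded_space = vec_space +
  assumes graded: "graded L"
begin

lemma grd_subspace [simp]: "subspace L (grd L k)"
  using graded by (simp add: graded_def)

lemma grd_subset: "v \<in> grd L k \<Longrightarrow> v \<in> carrier L"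
  using grd_subspace subspace_subset by blast

lemma zero_grd [simp]: "zero L \<in> grd L k"
  by (simp add: subspace_zero)

lemma add_grd: "x \<in> grd L k \<Longrightarrow> y \<in> grd L k \<Longrightarrow> add L x y \<in> grd L k"
  by (simp add: subspace_add)

lemma scal_grd: "x \<in> grd L k \<Longrightarrow> scal L c x \<in> grd L k"
  by (simp add: subspace_scal)

lemma carrier_eq_sum_space: "carrier L = sum_space L (grd L)"
  using graded sum_space_eq_hsums[of "grd L"] by (simp add: graded_def)

lemma vsum_grd_eq_zero:
  assumes "finite S" "\<forall>k\<in>S. f k \<in> grd L k" "vsum L f S = zero L"
  shows "\<forall>k\<in>S. f k = zero L"
proof -
  have "hsum L (sorted_list_of_set S) f = zero L"
    using assms grd_subset by (subst hsum_eq_vsum) auto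
  moreover have "distinct ks \<and> (\<forall>k\<in>set ks. c k \<in> grd L k) \<and> hsum L ks c = zero L
      \<longrightarrow> (\<forall>k\<in>set ks. c k = zero L)" for ks c
    using graded unfolding graded_def by blast
  ultimately show ?thesis
    using assms(1,2) by (metis distinct_sorted_list_of_set set_sorted_list_of_set)
qed

lemma vsum_grd_unique:
  assumes S: "finite S" "\<forall>k\<in>S. f k \<in> grd L k" and T: "finite T" "\<forall>k\<in>T. g k \<in> grd L k"
    and eq: "vsum L f S = vsum L g T"
  shows "(if k \<in> S then f k else zero L) = (if k \<in> T then g k else zero L)"
proof -
  define f' where "f' k = (if k \<in> S then f k else zero L)" for k
  define g' where "g' k = (if k \<in> T then g k else zero L)" for k
  have f'g: "f' k \<in> grd L k" and g'g: "g' k \<in> grd L k" for k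
    unfolding f'_def g'_def using S T by auto
  have f'c: "f' k \<in> carrier L" and g'c: "g' k \<in> carrier L" for k
    using f'g g'g grd_subset by auto
  have "vsum L f S = vsum L f' (S \<union> T)" "vsum L g T = vsum L g' (S \<union> T)"
    unfolding f'_def g'_def by (rule vsum_extend; use S T grd_subset in auto)+
  then have "vsum L f' (S \<union> T) = vsum L g' (S \<union> T)"
    using eq by simp
  then have "add L (vsum L f' (S \<union> T)) (neg L (vsum L g' (S \<union> T))) = zero L"
    using g'c by simp
  moreover have "neg L (vsum L g' (S \<union> T)) = vsum L (\<lambda>k. neg L (g' k)) (S \<union> T)"
    unfolding neg_def using g'c
    by (intro vsum_additive[OF vec_space_axioms vec_space_axioms subspace_carrier])
      (auto simp: scal_add_right)
  ultimately have "vsum L (\<lambda>k. add L (f' k) (neg L (g' k))) (S \<union> T) = zero L"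
    using f'c g'c by (simp add: vsum_add)
  then have "\<forall>k\<in>S \<union> T. add L (f' k) (neg L (g' k)) = zero L"
    using S T f'g g'g subspace_neg[OF grd_subspace]
    by (intro vsum_grd_eq_zero) (auto intro: add_grd)
  then have "f' k = g' k"
    using f'c g'c add_neg_eq_zeroD by (cases "k \<in> S \<union> T") (auto simp: f'_def g'_def)
  then show ?thesis
    unfolding f'_def g'_def .
qed

definition proj where
  "proj k x = (THE v. \<exists>S f. finite S \<and> (\<forall>j\<in>S. f j \<in> grd L j) \<and> x = vsum L f S \<and>
                 v = (if k \<in> S then f k else zero L))"

lemma proj_vsum:
  assumes "finite S" "\<forall>j\<in>S. f j \<in> grd L j"
  shows "proj k (vsum L f S) = (if k \<in> S then f k else zero L)"
  unfolding proj_def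
proof (rule the_equality)
  fix v
  assume "\<exists>T g. finite T \<and> (\<forall>j\<in>T. g j \<in> grd L j) \<and> vsum L f S = vsum L g T \<and>
    v = (if k \<in> T then g k else zero L)"
  then obtain T g where "finite T" "\<forall>j\<in>T. g j \<in> grd L j" "vsum L f S = vsum L g T"
    "v = (if k \<in> T then g k else zero L)"
    by blast
  then show "v = (if k \<in> S then f k else zero L)"
    using vsum_grd_unique[OF assms] by simp
qed (use assms in blast)

lemma grd_decompose:
  assumes "x \<in> carrier L"
  obtains S f where "finite S" "\<forall>j\<in>S. f j \<in> grd L j" "x = vsum L f S"
  using assms carrier_eq_sum_space unfolding sum_space_def by blast

lemma proj_grd [simp]:
  assumes "x \<in> carrier L"
  shows "proj k x \<in> grd L k"
proof -
  obtain S f where "finite S" "\<forall>j\<in>S. f j \<in> grd L j" "x = vsum L f S"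
    using assms by (rule grd_decompose)
  then show ?thesis
    by (simp add: proj_vsum)
qed

lemma proj_closed [simp]: "x \<in> carrier L \<Longrightarrow> proj k x \<in> carrier L"
  using proj_grd grd_subset by blast

lemma proj_homogeneous: "v \<in> grd L k \<Longrightarrow> proj j v = (if j = k then v else zero L)"
  using proj_vsum[of "{k}" "\<lambda>_. v" j] grd_subset by auto

lemma proj_zero [simp]: "proj j (zero L) = zero L"
  using proj_homogeneous[of "zero L" 0] by auto

definition supp where
  "supp x = {k. proj k x \<noteq> zero L}"

lemma finite_supp_vsum_proj:
  assumes "x \<in> carrier L"
  shows "finite (supp x)" "vsum L (\<lambda>k. proj k x) (supp x) = x"
proof -
  obtain S f where S: "finite S" "\<forall>j\<in>S. f j \<in> grd L j" "x = vsum L f S"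
    using assms by (rule grd_decompose)
  have "supp x \<subseteq> S"
    unfolding supp_def S(3) using proj_vsum[OF S(1,2)] by auto
  then show fin: "finite (supp x)"
    using S(1) finite_subset by blast
  have "x = vsum L (\<lambda>k. proj k x) S"
    using S grd_subset by (subst S(3), intro vsum_cong) (auto simp: proj_vsum)
  also have "\<dots> = vsum L (\<lambda>k. proj k x) (supp x)"
    using S(1) \<open>supp x \<subseteq> S\<close> assms by (intro vsum_mono_neutral[symmetric]) (auto simp: supp_def)
  finally show "vsum L (\<lambda>k. proj k x) (supp x) = x" ..
qed

lemma vsum_proj:
  assumes "x \<in> carrier L" "finite T" "supp x \<subseteq> T"
  shows "vsum L (\<lambda>k. proj k x) T = x"
proof -
  have "vsum L (\<lambda>k. proj k x) (supp x) = vsum L (\<lambda>k. proj k x) T"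
    by (rule vsum_mono_neutral) (use assms in \<open>auto simp: supp_def\<close>)
  then show ?thesis
    using finite_supp_vsum_proj(2)[OF assms(1)] by simp
qed

lemma proj_add:
  assumes x: "x \<in> carrier L" and y: "y \<in> carrier L"
  shows "proj k (add L x y) = add L (proj k x) (proj k y)"
proof -
  define T where "T = supp x \<union> supp y"
  have T: "finite T" "supp x \<subseteq> T" "supp y \<subseteq> T"
    unfolding T_def using finite_supp_vsum_proj x y by auto
  have "add L x y = vsum L (\<lambda>k. add L (proj k x) (proj k y)) T"
    using x y by (simp only: vsum_add vsum_proj[OF x T(1,2)] vsum_proj[OF y T(1,3)] proj_closed)
  also have "proj k \<dots> = (if k \<in> T then add L (proj k x) (proj k y) else zero L)"
    using x y by (intro proj_vsum T(1)) (simp add: add_grd)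
  moreover have "k \<notin> T \<Longrightarrow> proj k x = zero L \<and> proj k y = zero L"
    using T unfolding supp_def by blast
  ultimately show ?thesis
    using x y by auto
qed

lemma proj_scal:
  assumes x: "x \<in> carrier L"
  shows "proj k (scal L c x) = scal L c (proj k x)"
proof -
  have "scal L c x = scal L c (vsum L (\<lambda>k. proj k x) (supp x))"
    using finite_supp_vsum_proj[OF x] by simp
  also have "\<dots> = vsum L (\<lambda>k. scal L c (proj k x)) (supp x)"
    using x by (intro vsum_additive[OF vec_space_axioms vec_space_axioms subspace_carrier])
      (auto simp: scal_add_right)
  also have "proj k \<dots> = (if k \<in> supp x then scal L c (proj k x) else zero L)"
    using x finite_supp_vsum_proj[OF x] by (intro proj_vsum) (simp_all add: scal_grd)
  finally show ?thesis
    using x by (cases "k \<in> supp x") (simp_all add: supp_def)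
qed

lemma proj_eqI:
  assumes x: "x \<in> carrier L" and y: "y \<in> carrier L" and eq: "\<And>k. proj k x = proj k y"
  shows "x = y"
proof -
  have "x = vsum L (\<lambda>k. proj k x) (supp x)"
    using finite_supp_vsum_proj(2)[OF x] by simp
  also have "\<dots> = vsum L (\<lambda>k. proj k y) (supp y)"
    by (simp only: eq supp_def)
  also have "\<dots> = y"
    by (rule finite_supp_vsum_proj(2)[OF y])
  finally show ?thesis .
qed

end

lemma pos_part_carrier: "carrier (pos_part L) = span L (\<Union>k\<in>{1..}. grd L k)"
  by (simp add: pos_part_def)

lemma pos_part_simps [simp]:
  "grd (pos_part L) k = (if 1 \<le> k then grd L k else {zero L})"
  "add (pos_part L) = add L" "scal (pos_part L) = scal L" "brk (pos_part L) = brk L"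
  "zero (pos_part L) = zero L"
  by (simp_all add: pos_part_def)

context graded_space
begin

lemma graded_restrict:
  assumes W: "\<And>k. subspace L (W k)" and W_grd: "\<And>k. W k \<subseteq> grd L k"
  shows "graded (L\<lparr>carrier := span L (\<Union>k. W k), grd := W\<rparr>)"
proof -
  let ?M = "L\<lparr>carrier := span L (\<Union>k. W k), grd := W\<rparr>"
  have "hsum ?M = hsum L"
    by (intro ext) (simp add: hsum_def)
  moreover have "subspace ?M (W k)" for k
    using W sum_space_single[of _ W k] subspace_subset[OF W] sum_space_eq_span[OF W]
    unfolding subspace_def by auto
  moreover have "distinct ks \<and> (\<forall>k\<in>set ks. c k \<in> grd L k) \<and> hsum L ks c = zero L
      \<longrightarrow> (\<forall>k\<in>set ks. c k = zero L)" for ks c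
    using graded unfolding graded_def by blast
  ultimately show ?thesis
    unfolding graded_def using W_grd sum_space_eq_hsums[OF W] sum_space_eq_span[OF W]
    by (simp add: subset_iff) blast
qed

lemma span_grd_mem:
  assumes W: "\<And>k. subspace L (W k)" and W_grd: "\<And>k. W k \<subseteq> grd L k"
    and x: "x \<in> span L (\<Union>k. W k)" "x \<in> grd L m"
  shows "x \<in> W m"
proof -
  have "x \<in> sum_space L W"
    using x(1) sum_space_eq_span[of W, OF W] by simp
  then obtain S f where S: "finite S" "\<forall>k\<in>S. f k \<in> W k" "x = vsum L f S"
    unfolding sum_space_def by blast
  have "proj m x = (if m \<in> S then f m else zero L)"
    using S W_grd by (simp add: proj_vsum subset_iff)
  moreover have "proj m x = x"
    using proj_homogeneous[OF x(2)] by simp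
  ultimately show ?thesis
    using S(2) subspace_zero[OF W] by (cases "m \<in> S") auto
qed

lemma grd_subset_pos_part: "1 \<le> k \<Longrightarrow> grd L k \<subseteq> carrier (pos_part L)"
  unfolding pos_part_carrier using span_superset by fastforce

lemma pos_part_subspace: "subspace L (carrier (pos_part L))"
  unfolding pos_part_carrier by (rule span_subspace) (use grd_subset in blast)

lemma pos_part_eq_span_grd: "carrier (pos_part L) = span L (\<Union>k. grd (pos_part L) k)"
proof -
  have "(\<Union>k. grd (pos_part L) k) = (\<Union>k\<in>{1..}. grd L k)"
    using zero_grd[of 1] by (auto split: if_splits)
  then show ?thesis
    by (simp add: pos_part_carrier)
qed

lemma pos_part_iff: "x \<in> carrier (pos_part L) \<longleftrightarrow> x \<in> carrier L \<and> (\<forall>k\<le>0. proj k x = zero L)"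
proof
  let ?P = "{x \<in> carrier L. \<forall>k\<le>0. proj k x = zero L}"
  have "subspace L ?P"
    by (auto simp: subspace_def proj_add proj_scal)
  moreover have "(\<Union>k\<in>{1..}. grd L k) \<subseteq> ?P"
    using grd_subset by (auto simp: proj_homogeneous)
  ultimately have "carrier (pos_part L) \<subseteq> ?P"
    unfolding pos_part_carrier by (rule span_minimal)
  then show "x \<in> carrier (pos_part L) \<Longrightarrow> x \<in> carrier L \<and> (\<forall>k\<le>0. proj k x = zero L)"
    by blast
next
  assume x: "x \<in> carrier L \<and> (\<forall>k\<le>0. proj k x = zero L)"
  have "proj k x \<in> carrier (pos_part L)" if "k \<in> supp x" for k
  proof -
    have "1 \<le> k"
      using that x by (cases "k \<le> 0") (auto simp: supp_def)
    then show ?thesis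
      using grd_subset_pos_part proj_grd x by blast
  qed
  then have "vsum L (\<lambda>k. proj k x) (supp x) \<in> carrier (pos_part L)"
    by (rule vsum_in_subspace[OF pos_part_subspace])
  then show "x \<in> carrier (pos_part L)"
    using finite_supp_vsum_proj(2) x by simp
qed

lemma pos_part_subset: "x \<in> carrier (pos_part L) \<Longrightarrow> x \<in> carrier L"
  by (simp add: pos_part_iff)

lemma supp_pos_part:
  assumes "x \<in> carrier (pos_part L)"
  shows "supp x \<subseteq> {1..}"
proof
  fix k
  assume "k \<in> supp x"
  then have "\<not> k \<le> 0"
    using assms[unfolded pos_part_iff] by (auto simp: supp_def)
  then show "k \<in> {1..}"
    by simp
qed

end

section \<open>Lie superalgebras\<close>

locale lie_superalg =
  fixes L :: "('k::field, 'a) lsa"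
  assumes lsa: "lie_superalgebra L"

sublocale lie_superalg \<subseteq> graded_space
  using lsa by unfold_locales (simp_all add: lie_superalgebra_def)

context lie_superalg
begin

lemma brk_closed [simp]: "x \<in> carrier L \<Longrightarrow> y \<in> carrier L \<Longrightarrow> brk L x y \<in> carrier L"
  using lsa unfolding lie_superalgebra_def by simp

lemma brk_add_left:
  "x \<in> carrier L \<Longrightarrow> y \<in> carrier L \<Longrightarrow> z \<in> carrier L \<Longrightarrow>
    brk L (add L x y) z = add L (brk L x z) (brk L y z)"
  using lsa unfolding lie_superalgebra_def by blast

lemma brk_add_right:
  "x \<in> carrier L \<Longrightarrow> y \<in> carrier L \<Longrightarrow> z \<in> carrier L \<Longrightarrow>
    brk L z (add L x y) = add L (brk L z x) (brk L z y)"
  using lsa unfolding lie_superalgebra_def by blast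

lemma brk_scal_left: "x \<in> carrier L \<Longrightarrow> y \<in> carrier L \<Longrightarrow> brk L (scal L c x) y = scal L c (brk L x y)"
  using lsa unfolding lie_superalgebra_def by blast

lemma brk_scal_right: "x \<in> carrier L \<Longrightarrow> y \<in> carrier L \<Longrightarrow> brk L x (scal L c y) = scal L c (brk L x y)"
  using lsa unfolding lie_superalgebra_def by blast

lemma brk_grd: "x \<in> grd L i \<Longrightarrow> y \<in> grd L j \<Longrightarrow> brk L x y \<in> grd L (i + j)"
  using lsa unfolding lie_superalgebra_def by blast

lemma brk_antisym: "x \<in> grd L i \<Longrightarrow> y \<in> grd L j \<Longrightarrow> brk L x y = scal L (- ssign i j) (brk L y x)"
  using lsa unfolding lie_superalgebra_def by blast

lemma jacobi:
  "x \<in> grd L i \<Longrightarrow> y \<in> grd L j \<Longrightarrow> z \<in> carrier L \<Longrightarrow>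
    brk L x (brk L y z) = add L (brk L (brk L x y) z) (scal L (ssign i j) (brk L y (brk L x z)))"
  using lsa unfolding lie_superalgebra_def by blast

lemma brk_zero_left [simp]: "y \<in> carrier L \<Longrightarrow> brk L (zero L) y = zero L"
  using brk_scal_left[of "zero L" y 0] by simp

lemma brk_zero_right [simp]: "y \<in> carrier L \<Longrightarrow> brk L y (zero L) = zero L"
  using brk_scal_right[of y "zero L" 0] by simp

lemma vsum_brk_left:
  "(\<And>i. i \<in> S \<Longrightarrow> f i \<in> carrier L) \<Longrightarrow> y \<in> carrier L \<Longrightarrow>
    brk L (vsum L f S) y = vsum L (\<lambda>i. brk L (f i) y) S"
  by (rule vsum_additive[OF vec_space_axioms vec_space_axioms subspace_carrier])
    (simp_all add: brk_add_left)

lemma vsum_brk_right: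
  "(\<And>i. i \<in> S \<Longrightarrow> f i \<in> carrier L) \<Longrightarrow> y \<in> carrier L \<Longrightarrow>
    brk L y (vsum L f S) = vsum L (\<lambda>i. brk L y (f i)) S"
  by (rule vsum_additive[OF vec_space_axioms vec_space_axioms subspace_carrier])
    (simp_all add: brk_add_right)

lemma brk_vsum_vsum:
  assumes "\<And>i. i \<in> S \<Longrightarrow> f i \<in> carrier L" "\<And>j. j \<in> T \<Longrightarrow> g j \<in> carrier L"
  shows "brk L (vsum L f S) (vsum L g T) = vsum L (\<lambda>i. vsum L (\<lambda>j. brk L (f i) (g j)) T) S"
proof -
  have "brk L (vsum L f S) (vsum L g T) = vsum L (\<lambda>i. brk L (f i) (vsum L g T)) S"
    using assms by (intro vsum_brk_left) auto
  also have "\<dots> = vsum L (\<lambda>i. vsum L (\<lambda>j. brk L (f i) (g j)) T) S"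
    using assms by (intro vsum_cong vsum_brk_right) auto
  finally show ?thesis .
qed

lemma jacobi_left:
  assumes "x \<in> grd L i" "y \<in> grd L j" "z \<in> carrier L"
  shows "brk L (brk L x y) z = add L (brk L x (brk L y z)) (scal L (- ssign i j) (brk L y (brk L x z)))"
proof -
  let ?A = "brk L (brk L x y) z" and ?C = "brk L y (brk L x z)"
  have c: "?A \<in> carrier L" "?C \<in> carrier L"
    using assms grd_subset by auto
  have "add L (scal L (ssign i j) ?C) (scal L (- ssign i j) ?C) = scal L 0 ?C"
    using c by (simp add: scal_add_left[symmetric])
  then have "add L (brk L x (brk L y z)) (scal L (- ssign i j) ?C) = add L ?A (zero L)"
    using c by (simp add: jacobi[OF assms] add_assoc)
  then show ?thesis
    using c by simp
qed

lemma span_brk_closed: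
  assumes W: "\<And>k. subspace L (W k)"
    and W_brk: "\<And>i j a b. a \<in> W i \<Longrightarrow> b \<in> W j \<Longrightarrow> brk L a b \<in> W (i + j)"
    and x: "x \<in> span L (\<Union>k. W k)" and y: "y \<in> span L (\<Union>k. W k)"
  shows "brk L x y \<in> span L (\<Union>k. W k)"
proof -
  let ?S = "span L (\<Union>k. W k)"
  have S: "subspace L ?S"
    using W subspace_subset by (intro span_subspace) blast
  have Sc: "\<And>x. x \<in> ?S \<Longrightarrow> x \<in> carrier L"
    using S subspace_subset by blast
  have W_S: "W k \<subseteq> ?S" for k
    using span_superset by blast
  have right: "?S \<subseteq> {y \<in> ?S. brk L a y \<in> ?S}" if a: "a \<in> W i" for a i
  proof (rule span_minimal)
    have "a \<in> carrier L"
      using a W_S Sc by blast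
    then show "subspace L {y \<in> ?S. brk L a y \<in> ?S}"
      using S Sc by (auto simp: subspace_def brk_add_right brk_scal_right)
    show "(\<Union>k. W k) \<subseteq> {y \<in> ?S. brk L a y \<in> ?S}"
      using a W_brk W_S by blast
  qed
  have "?S \<subseteq> {x \<in> ?S. \<forall>y\<in>?S. brk L x y \<in> ?S}"
  proof (rule span_minimal)
    show "subspace L {x \<in> ?S. \<forall>y\<in>?S. brk L x y \<in> ?S}"
      using S Sc by (auto simp: subspace_def brk_add_left brk_scal_left)
    show "(\<Union>k. W k) \<subseteq> {x \<in> ?S. \<forall>y\<in>?S. brk L x y \<in> ?S}"
      using right W_S by blast
  qed
  then show ?thesis
    using x y by blast
qed

lemma graded_subalgebra_lsa:
  assumes W: "\<And>k. subspace L (W k)" and W_grd: "\<And>k. W k \<subseteq> grd L k"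
    and W_brk: "\<And>i j a b. a \<in> W i \<Longrightarrow> b \<in> W j \<Longrightarrow> brk L a b \<in> W (i + j)"
  shows "lie_superalgebra (L\<lparr>carrier := span L (\<Union>k. W k), grd := W\<rparr>)"
    (is "lie_superalgebra ?M")
proof -
  let ?S = "span L (\<Union>k. W k)"
  have S: "subspace L ?S"
    using W subspace_subset by (intro span_subspace) blast
  then have Sc: "\<And>x. x \<in> ?S \<Longrightarrow> x \<in> carrier L"
    using subspace_subset by blast
  have M: "carrier ?M = ?S" "grd ?M = W" "add ?M = add L" "scal ?M = scal L" "brk ?M = brk L"
    by simp_all
  show ?thesis
    unfolding lie_superalgebra_def M
  proof (intro conjI)
    show "vs ?M"
      by (rule vs_restrict[OF S])
    show "graded ?M"
      by (rule graded_restrict[OF W W_grd])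
    show "\<forall>x\<in>?S. \<forall>y\<in>?S. brk L x y \<in> ?S"
      using span_brk_closed[of W, OF W W_brk] by blast
    show "\<forall>x\<in>?S. \<forall>y\<in>?S. \<forall>z\<in>?S. brk L (add L x y) z = add L (brk L x z) (brk L y z) \<and>
        brk L z (add L x y) = add L (brk L z x) (brk L z y)"
      using Sc brk_add_left brk_add_right by blast
    show "\<forall>c. \<forall>x\<in>?S. \<forall>y\<in>?S. brk L (scal L c x) y = scal L c (brk L x y) \<and>
        brk L x (scal L c y) = scal L c (brk L x y)"
      using Sc brk_scal_left brk_scal_right by blast
    show "\<forall>i j. \<forall>x\<in>W i. \<forall>y\<in>W j. brk L x y \<in> W (i + j)"
      using W_brk by blast
    show "\<forall>i j. \<forall>x\<in>W i. \<forall>y\<in>W j. brk L x y = scal L (- ssign i j) (brk L y x)"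
      using W_grd brk_antisym by blast
    show "\<forall>i j. \<forall>x\<in>W i. \<forall>y\<in>W j. \<forall>z\<in>?S.
        brk L x (brk L y z) = add L (brk L (brk L x y) z) (scal L (ssign i j) (brk L y (brk L x z)))"
      using W_grd Sc jacobi by blast
  qed
qed

lemma pos_part_grd_brk:
  assumes a: "a \<in> grd (pos_part L) i" and b: "b \<in> grd (pos_part L) j"
  shows "brk L a b \<in> grd (pos_part L) (i + j)"
proof (cases "1 \<le> i \<and> 1 \<le> j")
  case True
  then show ?thesis
    using assms brk_grd by simp
next
  case False
  then have "a = zero L \<or> b = zero L"
    using assms by auto
  moreover have "a \<in> carrier L" "b \<in> carrier L"
    using assms grd_subset by (auto split: if_splits)
  ultimately show ?thesis
    by auto
qed

lemma pos_part_lsa: "lie_superalgebra (pos_part L)"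
proof -
  have "pos_part L = L\<lparr>carrier := span L (\<Union>k. grd (pos_part L) k), grd := grd (pos_part L)\<rparr>"
    using pos_part_eq_span_grd by (simp add: pos_part_def pos_part_carrier)
  moreover have "lie_superalgebra (L\<lparr>carrier := span L (\<Union>k. grd (pos_part L) k), grd := grd (pos_part L)\<rparr>)"
  proof (rule graded_subalgebra_lsa)
    show "\<And>k. subspace L (grd (pos_part L) k)"
      by (simp add: subspace_zero_singleton)
    show "\<And>k. grd (pos_part L) k \<subseteq> grd L k"
      by simp
  qed (rule pos_part_grd_brk)
  ultimately show ?thesis
    by simp
qed

lemma pos_part_brk_closed:
  "x \<in> carrier (pos_part L) \<Longrightarrow> y \<in> carrier (pos_part L) \<Longrightarrow> brk L x y \<in> carrier (pos_part L)"
  using pos_part_lsa unfolding lie_superalgebra_def by simp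

lemma idealiser_subspace:
  assumes "subspace L W"
  shows "subspace L (idealiser L W)"
  using assms subspace_subset
  by (auto simp: subspace_def idealiser_def brk_add_left brk_scal_left)

lemma eq_mod_brk:
  assumes W: "subspace L W" and a: "eq_mod W a u" and b: "eq_mod W b v"
    and u_W: "\<And>w. w \<in> W \<Longrightarrow> brk L u w \<in> W" and W_v: "\<And>w. w \<in> W \<Longrightarrow> brk L w v \<in> W"
    and W_W: "\<And>w w'. w \<in> W \<Longrightarrow> w' \<in> W \<Longrightarrow> brk L w w' \<in> W"
  shows "eq_mod W (brk L a b) (brk L u v)"
proof -
  obtain w where w: "w \<in> W" "a = add L u w" "u \<in> carrier L"
    using a unfolding eq_mod_def by blast
  obtain w' where w': "w' \<in> W" "b = add L v w'" "v \<in> carrier L"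
    using b unfolding eq_mod_def by blast
  have c: "w \<in> carrier L" "w' \<in> carrier L"
    using w w' W subspace_subset by auto
  have "brk L a b = add L (brk L u v) (add L (brk L w v) (add L (brk L u w') (brk L w w')))"
    using w w' c by (simp add: brk_add_left brk_add_right add_assoc)
  moreover have "add L (brk L w v) (add L (brk L u w') (brk L w w')) \<in> W"
    using w w' u_W W_v W_W W by (simp add: subspace_add)
  ultimately show ?thesis
    using w w' by (intro eq_modI) simp_all
qed

lemma pos_0_transitive_grdD:
  assumes trans: "pos_0_transitive L" and k: "k \<le> 0" and x: "x \<in> grd L k"
    and kill: "\<And>m g. 1 \<le> m \<Longrightarrow> g \<in> grd L m \<Longrightarrow> brk L x g = zero L"
  shows "x = zero L"
proof -
  have "x \<in> (\<Union>k\<in>{..0}. grd L k)"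
    using x k by auto
  then have "x \<in> nonpos_part L"
    unfolding nonpos_part_def by (rule subsetD[OF span_superset])
  moreover have "brk L y x = zero L" if y: "y \<in> carrier (pos_part L)" for y
  proof -
    have yc: "y \<in> carrier L"
      using y by (rule pos_part_subset)
    have "brk L (proj m y) x = zero L" if "m \<in> supp y" for m
    proof -
      have "1 \<le> m"
        using that supp_pos_part[OF y] by auto
      then have "brk L x (proj m y) = zero L"
        using proj_grd[OF yc] by (rule kill)
      then show ?thesis
        using brk_antisym[OF proj_grd[OF yc] x] by simp
    qed
    then have "vsum L (\<lambda>m. brk L (proj m y) x) (supp y) = zero L"
      by (rule vsum_zero)
    moreover have "brk L (vsum L (\<lambda>m. proj m y) (supp y)) x = vsum L (\<lambda>m. brk L (proj m y) x) (supp y)"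
      using x yc grd_subset by (intro vsum_brk_left) auto
    ultimately show ?thesis
      using finite_supp_vsum_proj(2)[OF yc] by simp
  qed
  ultimately show ?thesis
    using trans unfolding pos_0_transitive_def by simp
qed

lemma quot_brk_coset:
  assumes W: "subspace L W" and W_W: "\<And>w w'. w \<in> W \<Longrightarrow> w' \<in> W \<Longrightarrow> brk L w w' \<in> W"
    and u: "u \<in> idealiser L W" and v: "v \<in> carrier L" and W_v: "\<And>w. w \<in> W \<Longrightarrow> brk L w v \<in> W"
  shows "brk (quot L N W) (coset L W u) (coset L W v) = coset L W (brk L u v)"
proof -
  have uc: "u \<in> carrier L"
    using u by (simp add: idealiser_def)
  have "eq_mod W (brk L (SOME a. a \<in> coset L W u) (SOME b. b \<in> coset L W v)) (brk L u v)"
    using u W_v W_W uc v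
    by (intro eq_mod_brk[OF W some_coset_eq_mod[OF W] some_coset_eq_mod[OF W]])
      (simp_all add: idealiser_def)
  then show ?thesis
    using uc v eq_mod_closed[OF W] by (simp add: quot_def coset_eq_iff[OF W])
qed

lemma lsa_hom_quot:
  fixes G :: "('k, 'g) lsa" and \<psi> :: "'g \<Rightarrow> 'a"
  assumes W: "subspace L W"
    and W_W: "\<And>w w'. w \<in> W \<Longrightarrow> w' \<in> W \<Longrightarrow> brk L w w' \<in> W"
    and \<psi>_grd: "\<And>k x. x \<in> grd G k \<Longrightarrow> \<psi> x \<in> idealiser L W \<inter> grd L k"
    and \<psi>_idealiser: "\<And>x. x \<in> carrier G \<Longrightarrow> \<psi> x \<in> idealiser L W"
    and W_\<psi>: "\<And>x w. x \<in> carrier G \<Longrightarrow> w \<in> W \<Longrightarrow> brk L w (\<psi> x) \<in> W"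
    and \<psi>_add: "\<And>x y. x \<in> carrier G \<Longrightarrow> y \<in> carrier G \<Longrightarrow>
      eq_mod W (\<psi> (add G x y)) (add L (\<psi> x) (\<psi> y))"
    and \<psi>_scal: "\<And>c x. x \<in> carrier G \<Longrightarrow> eq_mod W (\<psi> (scal G c x)) (scal L c (\<psi> x))"
    and \<psi>_brk: "\<And>x y. x \<in> carrier G \<Longrightarrow> y \<in> carrier G \<Longrightarrow>
      eq_mod W (\<psi> (brk G x y)) (brk L (\<psi> x) (\<psi> y))"
  shows "lsa_hom G (quot L (idealiser L W) W) (\<lambda>x. coset L W (\<psi> x))"
proof -
  have \<psi>c: "\<psi> x \<in> carrier L" if "x \<in> carrier G" for x
    using \<psi>_idealiser[OF that] by (simp add: idealiser_def)
  have coset: "coset L W u = coset L W v" if "eq_mod W u v" for u v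
    using that eq_mod_closed[OF W] coset_eq_iff[OF W] by blast
  show ?thesis
    unfolding lsa_hom_def lin_map_def
  proof (intro conjI ballI allI)
    show "coset L W (\<psi> x) \<in> carrier (quot L (idealiser L W) W)" if "x \<in> carrier G" for x
      using \<psi>_idealiser[OF that] by (simp add: quot_def)
    show "coset L W (\<psi> x) \<in> grd (quot L (idealiser L W) W) k" if "x \<in> grd G k" for k x
      using \<psi>_grd[OF that] by (simp add: quot_def)
    show "coset L W (\<psi> (add G x y)) = add (quot L (idealiser L W) W) (coset L W (\<psi> x)) (coset L W (\<psi> y))"
      if "x \<in> carrier G" "y \<in> carrier G" for x y
      using coset[OF \<psi>_add[OF that]] by (simp add: quot_add_coset[OF W] \<psi>c that)
    show "coset L W (\<psi> (scal G c x)) = scal (quot L (idealiser L W) W) c (coset L W (\<psi> x))"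
      if "x \<in> carrier G" for c x
      using coset[OF \<psi>_scal[OF that]] by (simp add: quot_scal_coset[OF W] \<psi>c that)
    show "coset L W (\<psi> (brk G x y)) = brk (quot L (idealiser L W) W) (coset L W (\<psi> x)) (coset L W (\<psi> y))"
      if x: "x \<in> carrier G" and y: "y \<in> carrier G" for x y
      using coset[OF \<psi>_brk[OF x y]] W_\<psi>[OF y]
      by (simp add: quot_brk_coset[OF W W_W \<psi>_idealiser[OF x] \<psi>c[OF y]])
  qed
qed

lemma inj_on_coset:
  fixes G :: "('k, 'g) lsa" and \<psi> :: "'g \<Rightarrow> 'a"
  assumes G: "vec_space G" and W: "subspace L W"
    and \<psi>c: "\<And>x. x \<in> carrier G \<Longrightarrow> \<psi> x \<in> carrier L"
    and \<psi>_add: "\<And>x y. x \<in> carrier G \<Longrightarrow> y \<in> carrier G \<Longrightarrow>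
      eq_mod W (\<psi> (add G x y)) (add L (\<psi> x) (\<psi> y))"
    and \<psi>_scal: "\<And>c x. x \<in> carrier G \<Longrightarrow> eq_mod W (\<psi> (scal G c x)) (scal L c (\<psi> x))"
    and \<psi>_W: "\<And>x. x \<in> carrier G \<Longrightarrow> \<psi> x \<in> W \<Longrightarrow> x = zero G"
  shows "inj_on (\<lambda>x. coset L W (\<psi> x)) (carrier G)"
proof (rule inj_onI)
  interpret G: vec_space G by (rule G)
  fix x y
  assume x: "x \<in> carrier G" and y: "y \<in> carrier G"
    and "coset L W (\<psi> x) = coset L W (\<psi> y)"
  then have xy: "eq_mod W (\<psi> x) (\<psi> y)"
    using coset_eq_iff[OF W] \<psi>c by blast
  have "eq_mod W (\<psi> (add G x (neg G y))) (add L (\<psi> x) (\<psi> (neg G y)))"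
    using x y by (simp add: \<psi>_add)
  moreover have "eq_mod W (add L (\<psi> x) (\<psi> (neg G y))) (add L (\<psi> y) (neg L (\<psi> y)))"
    using eq_mod_add[OF W xy] \<psi>_scal[OF y, of "-1"] by (simp add: neg_def)
  ultimately have "eq_mod W (\<psi> (add G x (neg G y))) (zero L)"
    using y \<psi>c eq_mod_trans[OF W] by simp
  then have "\<psi> (add G x (neg G y)) \<in> W"
    by (simp add: eq_mod_zero_iff[OF W])
  then have "add G x (neg G y) = zero G"
    using x y by (intro \<psi>_W) simp_all
  then show "x = y"
    using x y by (rule G.add_neg_eq_zeroD[rotated 2])
qed

end

section \<open>Lifting \<open>G\<close> into the universal Lie superalgebra\<close>

locale prolongation =
  fixes G :: "('k::field, 'g) lsa" and U :: "('k, 'u) lsa" and \<pi> :: "'u \<Rightarrow> 'g"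
  assumes G_lsa: "lie_superalgebra G"
    and G_trans: "pos_0_transitive G"
    and G_gen: "lie_gen G (grd G 1) = carrier (pos_part G)"
    and U_univ: "universal_lsa U"
    and \<pi>_hom: "lsa_hom (pos_part U) (pos_part G) \<pi>"
    and \<pi>_bij: "bij_betw \<pi> (grd U 1) (grd G 1)"
begin

sublocale G: lie_superalg G
  by (rule lie_superalg.intro[OF G_lsa])

sublocale U: lie_superalg U
  using U_univ by (simp add: lie_superalg_def universal_lsa_def)

lemma \<pi>_closed: "x \<in> carrier (pos_part U) \<Longrightarrow> \<pi> x \<in> carrier (pos_part G)"
  using \<pi>_hom by (simp add: lsa_hom_def lin_map_def)

lemma \<pi>_add:
  "x \<in> carrier (pos_part U) \<Longrightarrow> y \<in> carrier (pos_part U) \<Longrightarrow> \<pi> (add U x y) = add G (\<pi> x) (\<pi> y)"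
  using \<pi>_hom by (simp add: lsa_hom_def lin_map_def)

lemma \<pi>_scal: "x \<in> carrier (pos_part U) \<Longrightarrow> \<pi> (scal U c x) = scal G c (\<pi> x)"
  using \<pi>_hom by (simp add: lsa_hom_def lin_map_def)

lemma \<pi>_brk:
  "x \<in> carrier (pos_part U) \<Longrightarrow> y \<in> carrier (pos_part U) \<Longrightarrow> \<pi> (brk U x y) = brk G (\<pi> x) (\<pi> y)"
  using \<pi>_hom by (simp add: lsa_hom_def)

lemma \<pi>_grd: "1 \<le> k \<Longrightarrow> x \<in> grd U k \<Longrightarrow> \<pi> x \<in> grd G k"
  using \<pi>_hom unfolding lsa_hom_def by (metis pos_part_simps(1))

lemma \<pi>_zero [simp]: "\<pi> (zero U) = zero G"
proof -
  have "\<forall>x\<in>grd (pos_part U) 0. \<pi> x \<in> grd (pos_part G) 0"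
    using \<pi>_hom unfolding lsa_hom_def by blast
  then show ?thesis
    by simp
qed

lemma \<pi>_vsum:
  "(\<And>i. i \<in> S \<Longrightarrow> f i \<in> carrier (pos_part U)) \<Longrightarrow> \<pi> (vsum U f S) = vsum G (\<lambda>i. \<pi> (f i)) S"
  by (rule vsum_additive[OF U.vec_space_axioms G.vec_space_axioms U.pos_part_subspace])
    (auto simp: \<pi>_add G.pos_part_subset \<pi>_closed)

lemma \<pi>_proj:
  assumes x: "x \<in> carrier (pos_part U)" and k: "1 \<le> k"
  shows "G.proj k (\<pi> x) = \<pi> (U.proj k x)"
proof -
  have xc: "x \<in> carrier U"
    using x by (rule U.pos_part_subset)
  have supp: "U.supp x \<subseteq> {1..}"
    using U.supp_pos_part[OF x] .
  have "U.proj i x \<in> carrier (pos_part U)" if "i \<in> U.supp x" for i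
    using that supp U.grd_subset_pos_part[of i] U.proj_grd[OF xc] by auto
  then have "\<pi> (vsum U (\<lambda>i. U.proj i x) (U.supp x)) = vsum G (\<lambda>i. \<pi> (U.proj i x)) (U.supp x)"
    by (rule \<pi>_vsum)
  then have "G.proj k (\<pi> x) = G.proj k (vsum G (\<lambda>i. \<pi> (U.proj i x)) (U.supp x))"
    using U.finite_supp_vsum_proj(2)[OF xc] by simp
  also have "\<dots> = (if k \<in> U.supp x then \<pi> (U.proj k x) else zero G)"
    using supp U.proj_grd[OF xc] \<pi>_grd U.finite_supp_vsum_proj(1)[OF xc]
    by (intro G.proj_vsum) auto
  also have "\<dots> = \<pi> (U.proj k x)"
    unfolding U.supp_def by simp
  finally show ?thesis .
qed

lemma \<pi>_U1: "e \<in> grd U 1 \<Longrightarrow> \<pi> e \<in> grd G 1"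
  by (rule bij_betw_apply[OF \<pi>_bij])

lemma \<pi>_inj_U1: "e \<in> grd U 1 \<Longrightarrow> e' \<in> grd U 1 \<Longrightarrow> \<pi> e = \<pi> e' \<Longrightarrow> e = e'"
  using \<pi>_bij by (auto simp: bij_betw_def inj_on_def)

lemma U1_pos_part: "e \<in> grd U 1 \<Longrightarrow> e \<in> carrier (pos_part U)"
  using U.grd_subset_pos_part by blast

lemma image_\<pi>_subalgebra:
  "subspace G (\<pi> ` carrier (pos_part U)) \<and>
    (\<forall>a\<in>\<pi> ` carrier (pos_part U). \<forall>b\<in>\<pi> ` carrier (pos_part U). brk G a b \<in> \<pi> ` carrier (pos_part U))"
proof (intro conjI ballI)
  let ?I = "\<pi> ` carrier (pos_part U)"
  have P: "subspace U (carrier (pos_part U))"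
    by (rule U.pos_part_subspace)
  show "subspace G ?I"
    unfolding subspace_def
  proof (intro conjI ballI allI)
    show "?I \<subseteq> carrier G"
      using \<pi>_closed G.pos_part_subset by blast
    show "zero G \<in> ?I"
      using U.subspace_zero[OF P] \<pi>_zero by (metis image_eqI)
    show "add G a b \<in> ?I" if ab: "a \<in> ?I" "b \<in> ?I" for a b
    proof -
      obtain u v where "u \<in> carrier (pos_part U)" "v \<in> carrier (pos_part U)" "a = \<pi> u" "b = \<pi> v"
        using ab by blast
      then show ?thesis
        using \<pi>_add U.subspace_add[OF P] by (intro image_eqI[of _ _ "add U u v"]) auto
    qed
    show "scal G c a \<in> ?I" if a: "a \<in> ?I" for c a
    proof -
      obtain u where "u \<in> carrier (pos_part U)" "a = \<pi> u"
        using a by blast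
      then show ?thesis
        using \<pi>_scal U.subspace_scal[OF P] by (intro image_eqI[of _ _ "scal U c u"]) auto
    qed
  qed
  show "brk G a b \<in> ?I" if ab: "a \<in> ?I" "b \<in> ?I" for a b
  proof -
    obtain u v where "u \<in> carrier (pos_part U)" "v \<in> carrier (pos_part U)" "a = \<pi> u" "b = \<pi> v"
      using ab by blast
    then show ?thesis
      using \<pi>_brk U.pos_part_brk_closed by (intro image_eqI[of _ _ "brk U u v"]) auto
  qed
qed

lemma \<pi>_surj:
  assumes k: "1 \<le> k" and g: "g \<in> grd G k"
  shows "\<exists>u\<in>grd U k. \<pi> u = g"
proof -
  have "grd G 1 = \<pi> ` grd U 1"
    using \<pi>_bij by (simp add: bij_betw_def)
  also have "\<dots> \<subseteq> \<pi> ` carrier (pos_part U)"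
    using U1_pos_part by blast
  finally have "grd G 1 \<subseteq> \<pi> ` carrier (pos_part U)" .
  then have "lie_gen G (grd G 1) \<subseteq> \<pi> ` carrier (pos_part U)"
    unfolding lie_gen_def using image_\<pi>_subalgebra by blast
  moreover have "g \<in> carrier (pos_part G)"
    using G.grd_subset_pos_part k g by blast
  ultimately obtain u where u: "u \<in> carrier (pos_part U)" "g = \<pi> u"
    using G_gen by auto
  have "\<pi> (U.proj k u) = G.proj k g"
    using \<pi>_proj u k by simp
  also have "\<dots> = g"
    using G.proj_homogeneous[OF g] by simp
  finally show ?thesis
    using U.proj_grd u U.pos_part_subset by blast
qed

inductive gen_by_U1 :: "int \<Rightarrow> 'u \<Rightarrow> bool" where
  base: "e \<in> grd U 1 \<Longrightarrow> gen_by_U1 1 e"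
| zero: "gen_by_U1 m (zero U)"
| add: "gen_by_U1 m a \<Longrightarrow> gen_by_U1 m b \<Longrightarrow> gen_by_U1 m (add U a b)"
| scal: "gen_by_U1 m a \<Longrightarrow> gen_by_U1 m (scal U c a)"
| brk: "gen_by_U1 p a \<Longrightarrow> gen_by_U1 q b \<Longrightarrow> gen_by_U1 (p + q) (brk U a b)"

lemma gen_by_U1_grd: "gen_by_U1 m a \<Longrightarrow> a \<in> grd U m \<and> (1 \<le> m \<or> a = zero U)"
proof (induct rule: gen_by_U1.induct)
  case (brk p a q b)
  then have "brk U a b \<in> grd U (p + q)"
    using U.brk_grd by blast
  moreover have "1 \<le> p + q \<or> brk U a b = zero U"
    using brk U.grd_subset by auto
  ultimately show ?case
    by blast
qed (auto simp: U.add_grd U.scal_grd)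

lemma gen_by_U1_pos_grd: "gen_by_U1 m a \<Longrightarrow> a \<in> grd (pos_part U) m"
  using gen_by_U1_grd by auto

lemma gen_by_U1_pos_part: "gen_by_U1 m a \<Longrightarrow> a \<in> carrier (pos_part U)"
  using gen_by_U1_grd U.grd_subset_pos_part U.subspace_zero[OF U.pos_part_subspace] by blast

lemma gen_by_U1_subspace: "subspace U (Collect (gen_by_U1 k))"
  unfolding subspace_def
  using gen_by_U1_grd U.grd_subset gen_by_U1.zero gen_by_U1.add gen_by_U1.scal by blast

lemma gen_by_U1_span_pos_part: "span U (\<Union>k. Collect (gen_by_U1 k)) \<subseteq> carrier (pos_part U)"
  using gen_by_U1_pos_part by (intro U.span_minimal[OF U.pos_part_subspace]) auto

lemma pos_part_endomorphism_eq_id: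
  assumes \<phi>: "lsa_hom (pos_part U) (pos_part U) \<phi>" "\<And>u. u \<in> grd U 1 \<Longrightarrow> \<phi> u = u"
    and x: "x \<in> carrier (pos_part U)"
  shows "\<phi> x = x"
proof -
  have "lsa_hom (pos_part U) (pos_part U) id" "lin_map U (pos_part U) (grd U 1) (grd (pos_part U) 1) id"
    by (simp_all add: lsa_hom_def lin_map_def)
  then show ?thesis
    using U_univ U.pos_part_lsa \<phi> x unfolding universal_lsa_def free_pos_part_def by (metis id_apply)
qed

text \<open>
  By freeness, the identity of \<open>U\<^sub>1\<close> extends to a morphism \<open>\<phi>\<close> from \<open>U\<^sub>+\<close> onto the
  subalgebra generated by \<open>U\<^sub>1\<close>; viewed as an endomorphism of \<open>U\<^sub>+\<close> it is the identity.
\<close>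
lemma pos_grd_gen_by_U1:
  assumes m: "1 \<le> m" and b: "b \<in> grd U m"
  shows "gen_by_U1 m b"
proof -
  let ?W = "\<lambda>k. Collect (gen_by_U1 k)"
  let ?M = "U\<lparr>carrier := span U (\<Union>k. ?W k), grd := ?W\<rparr>"
  have W_grd: "?W k \<subseteq> grd U k" for k
    using gen_by_U1_grd by blast
  have "lie_superalgebra ?M"
    using gen_by_U1.brk by (intro U.graded_subalgebra_lsa[OF gen_by_U1_subspace W_grd]) auto
  moreover have "lin_map U ?M (grd U 1) (grd ?M 1) id"
    using gen_by_U1.base by (simp add: lin_map_def)
  ultimately obtain \<phi> where \<phi>: "lsa_hom (pos_part U) ?M \<phi>" "\<forall>u\<in>grd U 1. \<phi> u = id u"
    using U_univ unfolding universal_lsa_def free_pos_part_def by blast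
  have "lsa_hom (pos_part U) (pos_part U) \<phi>"
    using \<phi>(1) gen_by_U1_span_pos_part gen_by_U1_pos_grd unfolding lsa_hom_def lin_map_def
    by (simp add: subset_iff del: pos_part_simps(1))
  then have "\<phi> b = b"
    using pos_part_endomorphism_eq_id \<phi>(2) U.grd_subset_pos_part[OF m] b by auto
  moreover have "\<phi> b \<in> span U (\<Union>k. ?W k)"
    using \<phi>(1) U.grd_subset_pos_part[OF m] b unfolding lsa_hom_def lin_map_def by auto
  ultimately show ?thesis
    using U.span_grd_mem[OF gen_by_U1_subspace W_grd _ b] by simp
qed

text \<open>In positive degrees zero is lifted to zero, so that \<open>rho k\<close> vanishes at zero in every degree.\<close>
function rho :: "int \<Rightarrow> 'g \<Rightarrow> 'u" where
  "rho k x =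
    (if 1 \<le> k then (if x = zero G then zero U else SOME u. u \<in> grd U k \<and> \<pi> u = x)
     else THE u. u \<in> grd U k \<and> (\<forall>e\<in>grd U 1. brk U u e = rho (k + 1) (brk G x (\<pi> e))))"
  by auto
termination
  by (relation "measure (\<lambda>(k, x). nat (1 - k))") auto

declare rho.simps [simp del]

lemma rho_pos:
  assumes "1 \<le> k" "x \<in> grd G k"
  shows "rho k x \<in> grd U k" "\<pi> (rho k x) = x"
proof -
  have "\<exists>u. u \<in> grd U k \<and> \<pi> u = x"
    using \<pi>_surj[OF assms] by blast
  then have "rho k x \<in> grd U k \<and> \<pi> (rho k x) = x"
    using assms(1) by (subst (1 2) rho.simps) (simp add: someI_ex[where P = "\<lambda>u. u \<in> grd U k \<and> \<pi> u = x"])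
  then show "rho k x \<in> grd U k" "\<pi> (rho k x) = x"
    by auto
qed

lemma rho_one_linear: "lin_map G U (grd G 1) (grd U 1) (rho 1)"
  unfolding lin_map_def
proof (intro conjI ballI allI)
  show "rho 1 x \<in> grd U 1" if "x \<in> grd G 1" for x
    using rho_pos[OF _ that] by simp
  show "rho 1 (add G x y) = add U (rho 1 x) (rho 1 y)" if x: "x \<in> grd G 1" and y: "y \<in> grd G 1" for x y
    using rho_pos[OF _ x] rho_pos[OF _ y] rho_pos[OF _ G.add_grd[OF x y]]
    by (intro \<pi>_inj_U1) (simp_all add: U.add_grd \<pi>_add U1_pos_part)
  show "rho 1 (scal G c x) = scal U c (rho 1 x)" if x: "x \<in> grd G 1" for c x
    using rho_pos[OF _ x] rho_pos[OF _ G.scal_grd[OF x]]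
    by (intro \<pi>_inj_U1) (simp_all add: U.scal_grd \<pi>_scal U1_pos_part)
qed

lemma transfer_lin_map:
  assumes x: "x \<in> grd G k" and h: "lin_map G U (grd G (k + 1)) (grd U (k + 1)) h"
  shows "lin_map U U (grd U 1) (grd U (k + 1)) (\<lambda>e. h (brk G x (\<pi> e)))"
proof -
  have xe: "brk G x (\<pi> e) \<in> grd G (k + 1)" and c: "\<pi> e \<in> carrier G" "e \<in> carrier (pos_part U)"
    if "e \<in> grd U 1" for e
    using G.brk_grd[OF x \<pi>_U1[OF that]] \<pi>_U1[OF that] G.grd_subset U1_pos_part[OF that] by auto
  have "x \<in> carrier G"
    using x G.grd_subset by blast
  then show ?thesis
    using h xe c by (simp add: lin_map_def \<pi>_add \<pi>_scal G.brk_add_right G.brk_scal_right)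
qed

lemma rho_nonpos:
  assumes k: "k \<le> 0" and lin: "lin_map G U (grd G (k + 1)) (grd U (k + 1)) (rho (k + 1))"
    and x: "x \<in> grd G k"
  shows "rho k x \<in> grd U k \<and> (\<forall>e\<in>grd U 1. brk U (rho k x) e = rho (k + 1) (brk G x (\<pi> e)))"
    and "u \<in> grd U k \<Longrightarrow> \<forall>e\<in>grd U 1. brk U u e = rho (k + 1) (brk G x (\<pi> e)) \<Longrightarrow> u = rho k x"
proof -
  let ?P = "\<lambda>u. u \<in> grd U k \<and> (\<forall>e\<in>grd U 1. brk U u e = rho (k + 1) (brk G x (\<pi> e)))"
  have ex: "\<exists>!u. ?P u"
    using U_univ k transfer_lin_map[OF x lin] unfolding universal_lsa_def by simp
  have eq: "rho k x = (THE u. ?P u)"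
    using k by (subst rho.simps) simp
  show "?P (rho k x)"
    unfolding eq by (rule theI'[OF ex])
  show "u = rho k x" if "u \<in> grd U k" "\<forall>e\<in>grd U 1. brk U u e = rho (k + 1) (brk G x (\<pi> e))"
    unfolding eq using that by (intro the1_equality[OF ex, symmetric]) simp
qed

text \<open>Linearity of \<open>rho k\<close> follows from the uniqueness in the universal property.\<close>
lemma rho_nonpos_add:
  assumes k: "k \<le> 0" and lin: "lin_map G U (grd G (k + 1)) (grd U (k + 1)) (rho (k + 1))"
    and x: "x \<in> grd G k" and y: "y \<in> grd G k"
  shows "rho k (add G x y) = add U (rho k x) (rho k y)"
proof (rule rho_nonpos(2)[OF k lin G.add_grd[OF x y], symmetric])
  note rx = rho_nonpos(1)[OF k lin x] and ry = rho_nonpos(1)[OF k lin y]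
  show "add U (rho k x) (rho k y) \<in> grd U k"
    using rx ry U.add_grd by blast
  show "\<forall>e\<in>grd U 1. brk U (add U (rho k x) (rho k y)) e = rho (k + 1) (brk G (add G x y) (\<pi> e))"
  proof
    fix e
    assume e: "e \<in> grd U 1"
    have "brk G x (\<pi> e) \<in> grd G (k + 1)" "brk G y (\<pi> e) \<in> grd G (k + 1)"
      using G.brk_grd x y \<pi>_U1[OF e] by auto
    moreover have "rho k x \<in> carrier U" "rho k y \<in> carrier U" "e \<in> carrier U"
      "x \<in> carrier G" "y \<in> carrier G" "\<pi> e \<in> carrier G"
      using rx ry x y e \<pi>_U1[OF e] G.grd_subset U.grd_subset by blast+
    ultimately show "brk U (add U (rho k x) (rho k y)) e = rho (k + 1) (brk G (add G x y) (\<pi> e))"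
      using rx ry lin e by (simp add: U.brk_add_left G.brk_add_left lin_map_def)
  qed
qed

lemma rho_nonpos_scal:
  assumes k: "k \<le> 0" and lin: "lin_map G U (grd G (k + 1)) (grd U (k + 1)) (rho (k + 1))"
    and x: "x \<in> grd G k"
  shows "rho k (scal G c x) = scal U c (rho k x)"
proof (rule rho_nonpos(2)[OF k lin G.scal_grd[OF x], symmetric])
  note rx = rho_nonpos(1)[OF k lin x]
  show "scal U c (rho k x) \<in> grd U k"
    using rx U.scal_grd by blast
  show "\<forall>e\<in>grd U 1. brk U (scal U c (rho k x)) e = rho (k + 1) (brk G (scal G c x) (\<pi> e))"
  proof
    fix e
    assume e: "e \<in> grd U 1"
    have "brk G x (\<pi> e) \<in> grd G (k + 1)"
      using G.brk_grd x \<pi>_U1[OF e] by auto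
    moreover have "rho k x \<in> carrier U" "e \<in> carrier U" "x \<in> carrier G" "\<pi> e \<in> carrier G"
      using rx x e \<pi>_U1[OF e] G.grd_subset U.grd_subset by blast+
    ultimately show "brk U (scal U c (rho k x)) e = rho (k + 1) (brk G (scal G c x) (\<pi> e))"
      using rx lin e by (simp add: U.brk_scal_left G.brk_scal_left lin_map_def)
  qed
qed

lemma rho_linear: "k \<le> 1 \<Longrightarrow> lin_map G U (grd G k) (grd U k) (rho k)"
proof (induct k rule: int_le_induct)
  case base
  show ?case
    by (rule rho_one_linear)
next
  case (step i)
  then have k: "i - 1 \<le> 0" and lin: "lin_map G U (grd G (i - 1 + 1)) (grd U (i - 1 + 1)) (rho (i - 1 + 1))"
    by simp_all
  show ?case
    unfolding lin_map_def
    using rho_nonpos(1)[OF k lin] rho_nonpos_add[OF k lin] rho_nonpos_scal[OF k lin] by blast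
qed

lemma rho_grd: "x \<in> grd G k \<Longrightarrow> rho k x \<in> grd U k"
  using rho_pos(1) rho_linear[of k] by (cases "1 \<le> k") (simp_all add: lin_map_def)

lemma rho_add: "k \<le> 1 \<Longrightarrow> x \<in> grd G k \<Longrightarrow> y \<in> grd G k \<Longrightarrow> rho k (add G x y) = add U (rho k x) (rho k y)"
  using rho_linear by (simp add: lin_map_def)

lemma rho_scal: "k \<le> 1 \<Longrightarrow> x \<in> grd G k \<Longrightarrow> rho k (scal G c x) = scal U c (rho k x)"
  using rho_linear by (simp add: lin_map_def)

lemma rho_zero [simp]: "rho k (zero G) = zero U"
proof (cases "1 \<le> k")
  case True
  then show ?thesis
    by (simp add: rho.simps)
next
  case False
  then show ?thesis
    using rho_scal[of k "zero G" 0] rho_grd[of "zero G" k] U.grd_subset by simp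
qed

lemma rho_brk_U1:
  "k \<le> 0 \<Longrightarrow> x \<in> grd G k \<Longrightarrow> e \<in> grd U 1 \<Longrightarrow> brk U (rho k x) e = rho (k + 1) (brk G x (\<pi> e))"
  using rho_nonpos(1)[OF _ rho_linear] by simp

lemma rho_unique:
  "k \<le> 0 \<Longrightarrow> x \<in> grd G k \<Longrightarrow> u \<in> grd U k \<Longrightarrow>
    (\<And>e. e \<in> grd U 1 \<Longrightarrow> brk U u e = rho (k + 1) (brk G x (\<pi> e))) \<Longrightarrow> u = rho k x"
  using rho_nonpos(2)[OF _ rho_linear] by simp

definition lifts :: "int \<Rightarrow> 'u \<Rightarrow> 'g \<Rightarrow> bool" where
  "lifts n u x \<longleftrightarrow> u \<in> grd U n \<and> x \<in> grd G n \<and> (if 1 \<le> n then \<pi> u = x else u = rho n x)"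

lemma lifts_grd: "lifts n u x \<Longrightarrow> u \<in> grd U n" "lifts n u x \<Longrightarrow> x \<in> grd G n"
  by (simp_all add: lifts_def)

lemma lifts_closed: "lifts n u x \<Longrightarrow> u \<in> carrier U" "lifts n u x \<Longrightarrow> x \<in> carrier G"
  using lifts_grd U.grd_subset G.grd_subset by blast+

lemma lifts_rho: "x \<in> grd G n \<Longrightarrow> lifts n (rho n x) x"
  using rho_grd rho_pos(2) by (simp add: lifts_def)

lemma lifts_pos: "1 \<le> n \<Longrightarrow> u \<in> grd U n \<Longrightarrow> lifts n u (\<pi> u)"
  using \<pi>_grd by (simp add: lifts_def)

lemma lifts_zero: "lifts n (zero U) (zero G)"
  using rho_zero by (simp add: lifts_def)

lemma lifts_add:
  assumes "lifts n u x" "lifts n v y"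
  shows "lifts n (add U u v) (add G x y)"
  using assms U.grd_subset_pos_part[of n] U.add_grd G.add_grd
  by (auto simp: lifts_def \<pi>_add rho_add subset_iff)

lemma lifts_scal:
  assumes "lifts n u x"
  shows "lifts n (scal U c u) (scal G c x)"
  using assms U.grd_subset_pos_part[of n] U.scal_grd G.scal_grd
  by (auto simp: lifts_def \<pi>_scal rho_scal subset_iff)

lemma lifts_unique: "n \<le> 1 \<Longrightarrow> lifts n u x \<Longrightarrow> lifts n v x \<Longrightarrow> u = v"
  using \<pi>_inj_U1 by (cases "n = 1") (auto simp: lifts_def)

lemma lifts_brk_pos:
  assumes "1 \<le> i" "1 \<le> j" "lifts i a x" "lifts j b y"
  shows "lifts (i + j) (brk U a b) (brk G x y)"
  using assms U.grd_subset_pos_part[of i] U.grd_subset_pos_part[of j] U.brk_grd G.brk_grd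
  by (auto simp: lifts_def \<pi>_brk subset_iff)

lemma lifts_brk_swap:
  assumes "lifts (j + i) (brk U b a) (brk G y x)" "lifts i a x" "lifts j b y"
  shows "lifts (i + j) (brk U a b) (brk G x y)"
proof -
  have "brk U a b = scal U (- ssign i j) (brk U b a)" "brk G x y = scal G (- ssign i j) (brk G y x)"
    using assms(2,3) lifts_grd U.brk_antisym G.brk_antisym by blast+
  then show ?thesis
    using lifts_scal[OF assms(1)] by (simp add: add.commute)
qed

lemma lifts_brk_U1:
  assumes "k \<le> 0" "lifts k a x" "e \<in> grd U 1"
  shows "lifts (k + 1) (brk U a e) (brk G x (\<pi> e))"
proof -
  have "brk U a e = rho (k + 1) (brk G x (\<pi> e))"
    using assms rho_brk_U1 by (simp add: lifts_def)
  then show ?thesis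
    using lifts_rho G.brk_grd[OF lifts_grd(2)[OF assms(2)] \<pi>_U1[OF assms(3)]] by simp
qed

lemma lifts_brk_jacobi:
  assumes p: "1 \<le> p" and q: "1 \<le> q" and c: "c \<in> grd U p" and d: "d \<in> grd U q"
    and IHc: "\<And>k a x. k \<le> 0 \<Longrightarrow> lifts k a x \<Longrightarrow> lifts (k + p) (brk U a c) (brk G x (\<pi> c))"
    and IHd: "\<And>k a x. k \<le> 0 \<Longrightarrow> lifts k a x \<Longrightarrow> lifts (k + q) (brk U a d) (brk G x (\<pi> d))"
    and k: "k \<le> 0" and a: "lifts k a x"
  shows "lifts (k + (p + q)) (brk U a (brk U c d)) (brk G x (\<pi> (brk U c d)))"
proof -
  have ag: "a \<in> grd U k" "x \<in> grd G k"
    using a lifts_grd by auto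
  have lc: "lifts p c (\<pi> c)" and ld: "lifts q d (\<pi> d)"
    using lifts_pos p q c d by auto
  have cg: "\<pi> c \<in> grd G p" and dc: "d \<in> carrier U" "\<pi> d \<in> carrier G"
    using lc ld lifts_grd lifts_closed by auto
  have "lifts (k + p + q) (brk U (brk U a c) d) (brk G (brk G x (\<pi> c)) (\<pi> d))"
  proof (cases "k + p \<le> 0")
    case True
    then show ?thesis
      using IHd IHc[OF k a] by blast
  next
    case False
    then show ?thesis
      using lifts_brk_pos[OF _ q IHc[OF k a] ld] by simp
  qed
  moreover have "lifts (k + q + p) (brk U c (brk U a d)) (brk G (\<pi> c) (brk G x (\<pi> d)))"
  proof (cases "k + q \<le> 0")
    case True
    then show ?thesis
      using lifts_brk_swap[OF IHc[OF True IHd[OF k a]] lc IHd[OF k a]] by (simp add: add.commute)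
  next
    case False
    then show ?thesis
      using lifts_brk_pos[OF p _ lc IHd[OF k a]] by (simp add: add.commute)
  qed
  ultimately have "lifts (k + (p + q))
      (add U (brk U (brk U a c) d) (scal U (ssign k p) (brk U c (brk U a d))))
      (add G (brk G (brk G x (\<pi> c)) (\<pi> d)) (scal G (ssign k p) (brk G (\<pi> c) (brk G x (\<pi> d)))))"
    by (intro lifts_add lifts_scal) (simp_all add: algebra_simps)
  moreover have "\<pi> (brk U c d) = brk G (\<pi> c) (\<pi> d)"
    using \<pi>_brk U.grd_subset_pos_part p q c d by blast
  ultimately show ?thesis
    using U.jacobi[OF ag(1) c dc(1)] G.jacobi[OF ag(2) cg dc(2)] by simp
qed

lemma lifts_brk_gen:
  "gen_by_U1 m b \<Longrightarrow> k \<le> 0 \<Longrightarrow> lifts k a x \<Longrightarrow> lifts (k + m) (brk U a b) (brk G x (\<pi> b))"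
proof (induct m b arbitrary: k a x rule: gen_by_U1.induct)
  case (base e)
  then show ?case
    by (intro lifts_brk_U1)
next
  case (zero m)
  then show ?case
    using lifts_zero lifts_closed by simp
next
  case (add m b b')
  then have "b \<in> carrier (pos_part U)" "b' \<in> carrier (pos_part U)"
    using gen_by_U1_pos_part by blast+
  then show ?case
    using lifts_add[OF add(2)[OF add(5,6)] add(4)[OF add(5,6)]] lifts_closed[OF add(6)]
    by (simp add: \<pi>_add U.brk_add_right G.brk_add_right U.pos_part_subset G.pos_part_subset \<pi>_closed)
next
  case (scal m b c)
  then have "b \<in> carrier (pos_part U)"
    using gen_by_U1_pos_part by blast
  then show ?case
    using lifts_scal[OF scal(2)[OF scal(3,4)]] lifts_closed[OF scal(4)]
    by (simp add: \<pi>_scal U.brk_scal_right G.brk_scal_right U.pos_part_subset G.pos_part_subset \<pi>_closed)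
next
  case (brk p c q d)
  have c: "c \<in> grd U p" "1 \<le> p \<or> c = zero U" and d: "d \<in> grd U q" "1 \<le> q \<or> d = zero U"
    using brk gen_by_U1_grd by blast+
  show ?case
  proof (cases "1 \<le> p \<and> 1 \<le> q")
    case True
    then show ?thesis
      using lifts_brk_jacobi[OF _ _ c(1) d(1) brk(2) brk(4) brk(5,6)] by blast
  next
    case False
    then have "brk U c d = zero U"
      using c d U.grd_subset by auto
    then show ?thesis
      using lifts_zero lifts_closed[OF brk(6)] by simp
  qed
qed

lemma lifts_brk_one_pos:
  assumes "1 \<le> i \<or> 1 \<le> j" "lifts i a x" "lifts j b y"
  shows "lifts (i + j) (brk U a b) (brk G x y)"
proof -
  have mixed: "lifts (i' + j') (brk U a' b') (brk G x' y')"
    if "i' \<le> 0" "1 \<le> j'" "lifts i' a' x'" "lifts j' b' y'" for i' j' a' b' x' y'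
  proof -
    have "b' \<in> grd U j'" "y' = \<pi> b'"
      using that by (simp_all add: lifts_def)
    then show ?thesis
      using lifts_brk_gen[OF pos_grd_gen_by_U1 that(1,3)] that(2) by simp
  qed
  consider "1 \<le> i" "1 \<le> j" | "1 \<le> i" "j \<le> 0" | "i \<le> 0" "1 \<le> j"
    using assms(1) by linarith
  then show ?thesis
  proof cases
    case 1
    then show ?thesis
      using lifts_brk_pos assms(2,3) by blast
  next
    case 2
    then show ?thesis
      using lifts_brk_swap[OF mixed[OF _ _ assms(3,2)] assms(2,3)] by simp
  next
    case 3
    then show ?thesis
      using mixed assms(2,3) by blast
  qed
qed

text \<open>
  For \<open>i, j \<le> 0\<close> the bracket \<open>[rho i x, rho j y]\<close> is identified by its action on \<open>U\<^sub>1\<close>, which by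
  Jacobi reduces to brackets of total degree \<open>i + j + 1\<close>; hence induction on \<open>-(i + j)\<close>.
\<close>
lemma lifts_brk_nonpos_step:
  assumes i: "i \<le> 0" and j: "j \<le> 0" and a: "lifts i a x" and b: "lifts j b y"
    and IH: "\<And>i' j' a' b' x' y'. i' + j' = i + j + 1 \<Longrightarrow> lifts i' a' x' \<Longrightarrow> lifts j' b' y' \<Longrightarrow>
      lifts (i + j + 1) (brk U a' b') (brk G x' y')"
  shows "lifts (i + j) (brk U a b) (brk G x y)"
proof -
  have ag: "a \<in> grd U i" "x \<in> grd G i" and bg: "b \<in> grd U j" "y \<in> grd G j"
    using a b lifts_grd by auto
  have abg: "brk U a b \<in> grd U (i + j)" and xyg: "brk G x y \<in> grd G (i + j)"
    using U.brk_grd G.brk_grd ag bg by auto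
  have "brk U a b = rho (i + j) (brk G x y)"
  proof (rule rho_unique[OF _ xyg abg])
    show "i + j \<le> 0"
      using i j by simp
    fix e
    assume e: "e \<in> grd U 1"
    have pe: "\<pi> e \<in> grd G 1" "\<pi> e \<in> carrier G" and ec: "e \<in> carrier U"
      using \<pi>_U1[OF e] e G.grd_subset U.grd_subset by auto
    have "lifts (i + j + 1)
        (add U (brk U a (brk U b e)) (scal U (- ssign i j) (brk U b (brk U a e))))
        (add G (brk G x (brk G y (\<pi> e))) (scal G (- ssign i j) (brk G y (brk G x (\<pi> e)))))"
      using IH[OF _ a lifts_brk_U1[OF j b e]] IH[OF _ b lifts_brk_U1[OF i a e]]
      by (intro lifts_add lifts_scal) simp_all
    then have "lifts (i + j + 1) (brk U (brk U a b) e) (brk G (brk G x y) (\<pi> e))"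
      using U.jacobi_left[OF ag(1) bg(1) ec] G.jacobi_left[OF ag(2) bg(2) pe(2)] by simp
    then show "brk U (brk U a b) e = rho (i + j + 1) (brk G (brk G x y) (\<pi> e))"
      using lifts_unique[OF _ _ lifts_rho[OF G.brk_grd[OF xyg pe(1)]]] i j by simp
  qed
  then show ?thesis
    using abg xyg i j by (simp add: lifts_def)
qed

lemma lifts_brk_nonpos:
  assumes "i \<le> 0" "j \<le> 0" "lifts i a x" "lifts j b y"
  shows "lifts (i + j) (brk U a b) (brk G x y)"
  using assms
proof (induct "nat (- (i + j))" arbitrary: i j a b x y rule: less_induct)
  case less
  show ?case
  proof (rule lifts_brk_nonpos_step[OF less(2-5)])
    fix i' j' a' b' x' y'
    assume "i' + j' = i + j + 1" "lifts i' a' x'" "lifts j' b' y'"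
    then show "lifts (i + j + 1) (brk U a' b') (brk G x' y')"
      using lifts_brk_one_pos less(1)[of i' j'] less(2,3)
      by (cases "1 \<le> i' \<or> 1 \<le> j'") (metis, fastforce)
  qed
qed

lemma lifts_brk:
  assumes "lifts i a x" "lifts j b y"
  shows "lifts (i + j) (brk U a b) (brk G x y)"
  using lifts_brk_one_pos lifts_brk_nonpos assms by (cases "1 \<le> i \<or> 1 \<le> j") auto

definition ker_\<pi> :: "'u set" where
  "ker_\<pi> = {x \<in> carrier (pos_part U). \<pi> x = zero G}"

lemma ker_\<pi>_subspace: "subspace U ker_\<pi>"
  using U.pos_part_subspace \<pi>_add \<pi>_scal
  by (auto simp: subspace_def ker_\<pi>_def U.pos_part_subset)

lemma lifts_zero_in_ker_\<pi>: "lifts n w (zero G) \<Longrightarrow> w \<in> ker_\<pi>"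
  using U.grd_subset_pos_part U.subspace_zero[OF ker_\<pi>_subspace]
  by (cases "1 \<le> n") (auto simp: lifts_def ker_\<pi>_def)

lemma lifts_proj_ker_\<pi>:
  assumes d: "d \<in> ker_\<pi>" and k: "k \<in> U.supp d"
  shows "lifts k (U.proj k d) (zero G)"
proof -
  have dP: "d \<in> carrier (pos_part U)" and d0: "\<pi> d = zero G"
    using d by (simp_all add: ker_\<pi>_def)
  have k1: "1 \<le> k"
    using k U.supp_pos_part[OF dP] by auto
  have "\<pi> (U.proj k d) = zero G"
    using \<pi>_proj[OF dP k1] d0 by simp
  moreover have "d \<in> carrier U"
    using dP by (rule U.pos_part_subset)
  ultimately show ?thesis
    using lifts_pos[OF k1 U.proj_grd] by metis
qed

lemma brk_ker_\<pi>_lifts: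
  assumes d: "d \<in> ker_\<pi>" and v: "lifts k v y"
  shows "brk U d v \<in> ker_\<pi>" "brk U v d \<in> ker_\<pi>"
proof -
  have dc: "d \<in> carrier U"
    using d U.subspace_subset[OF ker_\<pi>_subspace] by blast
  have vc: "v \<in> carrier U" and yc: "y \<in> carrier G"
    using lifts_closed v by auto
  have "brk U (U.proj m d) v \<in> ker_\<pi>" "brk U v (U.proj m d) \<in> ker_\<pi>" if "m \<in> U.supp d" for m
    using lifts_brk[OF lifts_proj_ker_\<pi>[OF d that] v] lifts_brk[OF v lifts_proj_ker_\<pi>[OF d that]] yc
    by (simp_all add: lifts_zero_in_ker_\<pi>)
  then have "vsum U (\<lambda>m. brk U (U.proj m d) v) (U.supp d) \<in> ker_\<pi>"
    "vsum U (\<lambda>m. brk U v (U.proj m d)) (U.supp d) \<in> ker_\<pi>"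
    by (simp_all add: U.vsum_in_subspace[OF ker_\<pi>_subspace])
  moreover have "brk U d v = vsum U (\<lambda>m. brk U (U.proj m d) v) (U.supp d)"
    "brk U v d = vsum U (\<lambda>m. brk U v (U.proj m d)) (U.supp d)"
    using U.vsum_brk_left[of "U.supp d" "\<lambda>m. U.proj m d" v]
      U.vsum_brk_right[of "U.supp d" "\<lambda>m. U.proj m d" v] U.finite_supp_vsum_proj(2)[OF dc] dc vc
    by simp_all
  ultimately show "brk U d v \<in> ker_\<pi>" "brk U v d \<in> ker_\<pi>"
    by simp_all
qed

lemma brk_ker_\<pi>: "d \<in> ker_\<pi> \<Longrightarrow> d' \<in> ker_\<pi> \<Longrightarrow> brk U d d' \<in> ker_\<pi>"
  using U.pos_part_brk_closed \<pi>_brk U.pos_part_subset by (auto simp: ker_\<pi>_def)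

lemma lifts_idealiser: "lifts k u x \<Longrightarrow> u \<in> idealiser U ker_\<pi>"
  using lifts_closed brk_ker_\<pi>_lifts(2) by (simp add: idealiser_def)

text \<open>\<open>lift\<close> is a morphism only modulo \<open>ker_\<pi>\<close>; the embedding is \<open>x \<mapsto> lift x + ker_\<pi>\<close>.\<close>
definition lift :: "'g \<Rightarrow> 'u" where
  "lift x = vsum U (\<lambda>k. rho k (G.proj k x)) (G.supp x)"

lemma lifts_proj: "x \<in> carrier G \<Longrightarrow> lifts k (rho k (G.proj k x)) (G.proj k x)"
  by (simp add: lifts_rho)

lemma lift_eq:
  assumes x: "x \<in> carrier G" and T: "finite T" "G.supp x \<subseteq> T"
  shows "lift x = vsum U (\<lambda>k. rho k (G.proj k x)) T"
  unfolding lift_def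
  using lifts_closed(1)[OF lifts_proj[OF x]] T by (intro U.vsum_mono_neutral) (auto simp: G.supp_def)

lemma lift_homogeneous:
  assumes x: "x \<in> grd G k"
  shows "lift x = rho k x"
proof -
  have xc: "x \<in> carrier G"
    using x G.grd_subset by blast
  have "lift x = vsum U (\<lambda>k. rho k (G.proj k x)) {k}"
    using G.proj_homogeneous[OF x] by (intro lift_eq[OF xc]) (auto simp: G.supp_def)
  also have "\<dots> = rho k (G.proj k x)"
    using lifts_closed(1)[OF lifts_proj[OF xc]] by simp
  finally show ?thesis
    using G.proj_homogeneous[OF x] by simp
qed

lemma lift_closed: "x \<in> carrier G \<Longrightarrow> lift x \<in> carrier U"
  unfolding lift_def using lifts_closed(1)[OF lifts_proj] by simp

lemma lift_idealiser: "x \<in> carrier G \<Longrightarrow> lift x \<in> idealiser U ker_\<pi>"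
  unfolding lift_def
  using lifts_idealiser[OF lifts_proj]
  by (simp add: U.vsum_in_subspace[OF U.idealiser_subspace[OF ker_\<pi>_subspace]])

lemma brk_ker_\<pi>_lift:
  assumes d: "d \<in> ker_\<pi>" and x: "x \<in> carrier G"
  shows "brk U d (lift x) \<in> ker_\<pi>"
proof -
  have "brk U d (lift x) = vsum U (\<lambda>k. brk U d (rho k (G.proj k x))) (G.supp x)"
    unfolding lift_def using d U.subspace_subset[OF ker_\<pi>_subspace] lifts_closed(1)[OF lifts_proj[OF x]]
    by (intro U.vsum_brk_right) auto
  also have "\<dots> \<in> ker_\<pi>"
    using brk_ker_\<pi>_lifts(1)[OF d lifts_proj[OF x]]
    by (simp add: U.vsum_in_subspace[OF ker_\<pi>_subspace])
  finally show ?thesis .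
qed

abbreviation eq_ker :: "'u \<Rightarrow> 'u \<Rightarrow> bool" where
  "eq_ker \<equiv> U.eq_mod ker_\<pi>"

lemma eq_ker_trans [trans]: "eq_ker a b \<Longrightarrow> eq_ker b c \<Longrightarrow> eq_ker a c"
  by (rule U.eq_mod_trans[OF ker_\<pi>_subspace])

lemma lifts_eq_ker: "lifts n u x \<Longrightarrow> lifts n v x \<Longrightarrow> eq_ker u v"
proof -
  assume u: "lifts n u x" and v: "lifts n v x"
  have "lifts n (add U u (neg U v)) (add G x (neg G x))"
    using lifts_add[OF u lifts_scal[OF v]] by (simp add: neg_def)
  then have "add U u (neg U v) \<in> ker_\<pi>"
    using lifts_closed(2)[OF u] lifts_zero_in_ker_\<pi> by simp
  moreover have "u = add U v (add U u (neg U v))"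
    using lifts_closed(1)[OF u] lifts_closed(1)[OF v] by (simp add: U.add_add_neg_cancel)
  ultimately show "eq_ker u v"
    using lifts_closed(1)[OF v] by (intro U.eq_modI)
qed

lemma lift_add:
  assumes x: "x \<in> carrier G" and y: "y \<in> carrier G"
  shows "eq_ker (lift (add G x y)) (add U (lift x) (lift y))"
proof -
  define T where "T = G.supp x \<union> G.supp y \<union> G.supp (add G x y)"
  have T: "finite T"
    unfolding T_def using G.finite_supp_vsum_proj(1) x y by simp
  have "lift (add G x y) = vsum U (\<lambda>k. rho k (G.proj k (add G x y))) T"
    "lift x = vsum U (\<lambda>k. rho k (G.proj k x)) T" "lift y = vsum U (\<lambda>k. rho k (G.proj k y)) T"
    by (rule lift_eq; use x y T in \<open>auto simp: T_def\<close>)+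
  moreover have "add U (vsum U (\<lambda>k. rho k (G.proj k x)) T) (vsum U (\<lambda>k. rho k (G.proj k y)) T)
      = vsum U (\<lambda>k. add U (rho k (G.proj k x)) (rho k (G.proj k y))) T"
    using lifts_closed(1)[OF lifts_proj] x y by (intro U.vsum_add[symmetric]) auto
  moreover have "eq_ker (vsum U (\<lambda>k. rho k (G.proj k (add G x y))) T)
      (vsum U (\<lambda>k. add U (rho k (G.proj k x)) (rho k (G.proj k y))) T)"
  proof (rule U.eq_mod_vsum[OF ker_\<pi>_subspace])
    fix k
    have "lifts k (add U (rho k (G.proj k x)) (rho k (G.proj k y))) (G.proj k (add G x y))"
      using lifts_add[OF lifts_proj[OF x] lifts_proj[OF y]] x y by (simp add: G.proj_add)
    then show "eq_ker (rho k (G.proj k (add G x y))) (add U (rho k (G.proj k x)) (rho k (G.proj k y)))"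
      using lifts_eq_ker[OF lifts_proj] x y by simp
  qed
  ultimately show ?thesis
    by simp
qed

lemma lift_scal:
  assumes x: "x \<in> carrier G"
  shows "eq_ker (lift (scal G c x)) (scal U c (lift x))"
proof -
  define T where "T = G.supp x \<union> G.supp (scal G c x)"
  have T: "finite T"
    unfolding T_def using G.finite_supp_vsum_proj(1) x by simp
  have "lift (scal G c x) = vsum U (\<lambda>k. rho k (G.proj k (scal G c x))) T"
    "lift x = vsum U (\<lambda>k. rho k (G.proj k x)) T"
    by (rule lift_eq; use x T in \<open>auto simp: T_def\<close>)+
  moreover have "scal U c (vsum U (\<lambda>k. rho k (G.proj k x)) T)
      = vsum U (\<lambda>k. scal U c (rho k (G.proj k x))) T"
    using lifts_closed(1)[OF lifts_proj] x
    by (intro vsum_additive[OF U.vec_space_axioms U.vec_space_axioms U.subspace_carrier])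
      (auto simp: U.scal_add_right)
  moreover have "eq_ker (vsum U (\<lambda>k. rho k (G.proj k (scal G c x))) T)
      (vsum U (\<lambda>k. scal U c (rho k (G.proj k x))) T)"
  proof (rule U.eq_mod_vsum[OF ker_\<pi>_subspace])
    fix k
    have "lifts k (scal U c (rho k (G.proj k x))) (G.proj k (scal G c x))"
      using lifts_scal[OF lifts_proj[OF x]] x by (simp add: G.proj_scal)
    then show "eq_ker (rho k (G.proj k (scal G c x))) (scal U c (rho k (G.proj k x)))"
      using lifts_eq_ker[OF lifts_proj] x by simp
  qed
  ultimately show ?thesis
    by simp
qed

lemma lift_vsum:
  assumes "\<And>i. i \<in> S \<Longrightarrow> h i \<in> carrier G"
  shows "eq_ker (lift (vsum G h S)) (vsum U (\<lambda>i. lift (h i)) S)"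
  using assms
proof (induct S rule: infinite_finite_induct)
  case (insert i S)
  have h: "\<And>j. j \<in> insert i S \<Longrightarrow> h j \<in> carrier G"
    using insert(4) by blast
  then have hS: "vsum G h S \<in> carrier G" "h i \<in> carrier G"
    by auto
  have "eq_ker (lift (add G (h i) (vsum G h S))) (add U (lift (h i)) (lift (vsum G h S)))"
    using lift_add[OF hS(2,1)] .
  also have "eq_ker \<dots> (add U (lift (h i)) (vsum U (\<lambda>i. lift (h i)) S))"
    using insert h lift_closed hS
    by (intro U.eq_mod_add[OF ker_\<pi>_subspace U.eq_mod_refl[OF ker_\<pi>_subspace]]) auto
  finally have "eq_ker (lift (add G (h i) (vsum G h S))) (add U (lift (h i)) (vsum U (\<lambda>i. lift (h i)) S))" .
  moreover have "vsum G h (insert i S) = add G (h i) (vsum G h S)"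
    using h by (rule G.vsum_insert[OF insert(1,2)])
  moreover have "vsum U (\<lambda>i. lift (h i)) (insert i S) = add U (lift (h i)) (vsum U (\<lambda>i. lift (h i)) S)"
    using h lift_closed by (intro U.vsum_insert[OF insert(1,2)]) auto
  ultimately show ?case
    by simp
qed (simp_all add: lift_def G.supp_def U.eq_mod_refl[OF ker_\<pi>_subspace])

lemma lift_brk:
  assumes x: "x \<in> carrier G" and y: "y \<in> carrier G"
  shows "eq_ker (lift (brk G x y)) (brk U (lift x) (lift y))"
proof -
  define S T where "S = G.supp x" and "T = G.supp y"
  define xi yj where "xi i = G.proj i x" and "yj j = G.proj j y" for i j
  have xi: "xi i \<in> grd G i" "xi i \<in> carrier G" and yj: "yj j \<in> grd G j" "yj j \<in> carrier G" for i j
    unfolding xi_def yj_def using x y G.grd_subset by auto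
  have rc: "rho i (xi i) \<in> carrier U" "rho j (yj j) \<in> carrier U" for i j
    using lifts_closed(1)[OF lifts_rho] xi yj by auto
  have "brk G x y = vsum G (\<lambda>i. vsum G (\<lambda>j. brk G (xi i) (yj j)) T) S"
    using G.brk_vsum_vsum[of S xi T yj] xi yj G.finite_supp_vsum_proj(2) x y
    unfolding S_def T_def xi_def yj_def by simp
  then have "eq_ker (lift (brk G x y)) (vsum U (\<lambda>i. lift (vsum G (\<lambda>j. brk G (xi i) (yj j)) T)) S)"
    using xi yj by (simp add: lift_vsum)
  also have "eq_ker \<dots> (vsum U (\<lambda>i. vsum U (\<lambda>j. lift (brk G (xi i) (yj j))) T) S)"
    using xi yj by (intro U.eq_mod_vsum[OF ker_\<pi>_subspace] lift_vsum) simp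
  also have "eq_ker \<dots> (vsum U (\<lambda>i. vsum U (\<lambda>j. brk U (rho i (xi i)) (rho j (yj j))) T) S)"
  proof (intro U.eq_mod_vsum[OF ker_\<pi>_subspace])
    fix i j
    have "lift (brk G (xi i) (yj j)) = rho (i + j) (brk G (xi i) (yj j))"
      using G.brk_grd xi yj by (simp add: lift_homogeneous)
    then show "eq_ker (lift (brk G (xi i) (yj j))) (brk U (rho i (xi i)) (rho j (yj j)))"
      using lifts_eq_ker[OF lifts_rho lifts_brk[OF lifts_rho lifts_rho]] G.brk_grd xi yj by simp
  qed
  also have "\<dots> = brk U (lift x) (lift y)"
    unfolding lift_def S_def T_def xi_def yj_def using rc[unfolded xi_def yj_def]
    by (intro U.brk_vsum_vsum[symmetric]) auto
  finally show ?thesis .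
qed

lemma proj_lift:
  assumes z: "z \<in> carrier G"
  shows "U.proj k (lift z) = rho k (G.proj k z)"
proof -
  have "U.proj k (lift z) = (if k \<in> G.supp z then rho k (G.proj k z) else zero U)"
    unfolding lift_def using G.finite_supp_vsum_proj(1)[OF z] lifts_grd(1)[OF lifts_proj[OF z]]
    by (intro U.proj_vsum) auto
  then show ?thesis
    by (simp add: G.supp_def)
qed

lemma rho_eq_zeroD:
  assumes "k \<le> 0" "x \<in> grd G k" "rho k x = zero U"
  shows "x = zero G"
  using assms
proof (induct "nat (- k)" arbitrary: k x rule: less_induct)
  case less
  note k = less(2) and x = less(3) and rx = less(4)
  show ?case
  proof (rule G.pos_0_transitive_grdD[OF G_trans k x])
    fix m g
    assume m: "1 \<le> m" and g: "g \<in> grd G m"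
    obtain b where b: "b \<in> grd U m" "\<pi> b = g"
      using \<pi>_surj[OF m g] by blast
    have "lifts k (zero U) x"
      using lifts_rho[OF x] rx by simp
    then have "lifts (k + m) (zero U) (brk G x g)"
      using lifts_brk[OF _ lifts_pos[OF m b(1)]] b U.grd_subset by force
    then show "brk G x g = zero G"
      using less(1)[of "k + m"] m by (cases "1 \<le> k + m") (auto simp: lifts_def)
  qed
qed

lemma lift_in_ker_\<pi>D:
  assumes z: "z \<in> carrier G" and ker: "lift z \<in> ker_\<pi>"
  shows "z = zero G"
proof (rule G.proj_eqI[OF z G.zero_closed])
  fix k
  have P: "lift z \<in> carrier (pos_part U)" and \<pi>0: "\<pi> (lift z) = zero G"
    using ker by (simp_all add: ker_\<pi>_def)
  show "G.proj k z = G.proj k (zero G)"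
  proof (cases "1 \<le> k")
    case True
    have "G.proj k z = \<pi> (rho k (G.proj k z))"
      using lifts_proj[OF z] True by (simp add: lifts_def)
    also have "\<dots> = G.proj k (\<pi> (lift z))"
      using \<pi>_proj[OF P True] proj_lift[OF z] by simp
    finally show ?thesis
      using \<pi>0 by simp
  next
    case False
    then have "rho k (G.proj k z) = zero U"
      using P proj_lift[OF z] U.pos_part_iff by auto
    then show ?thesis
      using rho_eq_zeroD[OF _ G.proj_grd[OF z]] False by simp
  qed
qed

theorem lift_coset_embedding:
  "lsa_hom G (quot U (idealiser U ker_\<pi>) ker_\<pi>) (\<lambda>x. coset U ker_\<pi> (lift x)) \<and>
    inj_on (\<lambda>x. coset U ker_\<pi> (lift x)) (carrier G)"
proof
  show "lsa_hom G (quot U (idealiser U ker_\<pi>) ker_\<pi>) (\<lambda>x. coset U ker_\<pi> (lift x))"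
  proof (rule U.lsa_hom_quot[OF ker_\<pi>_subspace brk_ker_\<pi>])
    show "lift x \<in> idealiser U ker_\<pi> \<inter> grd U k" if "x \<in> grd G k" for k x
      using that lifts_idealiser[OF lifts_rho] rho_grd by (simp add: lift_homogeneous)
  qed (simp_all add: lift_idealiser brk_ker_\<pi>_lift lift_add lift_scal lift_brk)
  show "inj_on (\<lambda>x. coset U ker_\<pi> (lift x)) (carrier G)"
    by (rule U.inj_on_coset[OF G.vec_space_axioms ker_\<pi>_subspace])
      (simp_all add: lift_closed lift_add lift_scal lift_in_ker_\<pi>D)
qed

end

lemma bij_betw_left_inverse:
  assumes "bij_betw f A B" "\<forall>x\<in>A. g (f x) = x"
  shows "bij_betw g B A"
proof (rule bij_betw_byWitness[where f' = f])
  show "\<forall>b\<in>B. f (g b) = b" "g ` B \<subseteq> A" "f ` A \<subseteq> B"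
    using assms by (auto simp: bij_betw_def)
qed (rule assms(2))

theorem proposition3p9:
  fixes G :: "('k::field_char_0, 'g) lsa"
    and U :: "('k, 'u) lsa"
    and \<iota> :: "'g \<Rightarrow> 'u"
    and \<pi> :: "'u \<Rightarrow> 'g"
  assumes G_lsa: "lie_superalgebra G"
    and G_trans: "pos_0_transitive G"
    and G_gen: "lie_gen G (grd G 1) = carrier (pos_part G)"
    and U_univ: "universal_lsa U"
    and \<iota>_lin: "lin_map G U (grd G 1) (grd U 1) \<iota>"
    and \<iota>_bij: "bij_betw \<iota> (grd G 1) (grd U 1)"
    and \<pi>_hom: "lsa_hom (pos_part U) (pos_part G) \<pi>"
    and \<pi>_id: "\<forall>x\<in>grd G 1. \<pi> (\<iota> x) = x"
  shows "let D = {x \<in> carrier (pos_part U). \<pi> x = zero G};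
             N = idealiser U D
         in \<exists>\<phi>. lsa_hom G (quot U N D) \<phi> \<and> inj_on \<phi> (carrier G)"
proof -
  have "bij_betw \<pi> (grd U 1) (grd G 1)"
    using \<iota>_bij \<pi>_id by (rule bij_betw_left_inverse)
  then interpret prolongation G U \<pi>
    using G_lsa G_trans G_gen U_univ \<pi>_hom by unfold_locales
  show ?thesis
    using lift_coset_embedding unfolding Let_def ker_\<pi>_def by blast
qed

end
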